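(* Let $m \ge r \ge 2$ be integers and let $F$ be an $(r-1)$-graph on $m-1$ vertices with $\pi(F) < 1/m$. Then there is $n_0$ such that for every $n\ge n_0$, $$\mathrm{EX}\left(n,(t+1)\widehat{F}\right) = K_t^r \mathbin{\bowtie} \mathrm{EX}(n-t,\widehat{F})$$ holds for all integers $t$ satisfying $$0 \le t \le \min\left\{\frac{1-m\cdot\pi(F)}{5m^2}\cdot\frac{\mathrm{ex}(n,\widehat{F})}{\binom{n-1}{r-1}},\ \frac{1-m\cdot \pi(F)}{40m^2}\cdot\frac{n-1}{r-1}\right\}.$$
   Context: A $k$-graph is a set of $k$-element subsets (edges) of a finite vertex set. For a $k$-graph $F$, $\mathrm{ex}(n,F)$ is the maximum number of edges of an $n$-vertex $k$-graph containing no copy of $F$, $\mathrm{EX}(n,F)$ is the set of such $n$-vertex $k$-graphs with exactly $\mathrm{ex}(n,F)$ edges, and $\pi(F) := \lim_{n\to\infty}\mathrm{ex}(n,F)/\binom{n}{k}$ is the Turán density. The suspension of an $(r-1)$-graph $F$ is the $r$-graph $\widehat{F} := \{\{v\}\cup e : e\in F\}$, where $v$ is a new vertex not in $V(F)$. For $t\ge 0$, $\mathrm{EX}(n,(t+1)\widehat F)$ is the set of $n$-vertex $r$-graphs that do not contain $t+1$ pairwise vertex-disjoint copies of $\widehat F$ and have the maximum number of edges among such $r$-graphs. $K_t^r$ is the complete $r$-graph on $t$ vertices; the join $\mathcal{G}\mathbin{\bowtie}\mathcal{H}$ of $r$-graphs on disjoint vertex sets is their disjoint union together with all $r$-sets meeting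 both vertex sets; $\mathcal{H}\mathbin{\bowtie}\mathcal{F}:=\{\mathcal{H}\mathbin{\bowtie}\mathcal{G}:\mathcal{G}\in\mathcal{F}\}$ (equality up to isomorphism). *)

theory Defs
  imports Complex_Main
begin

definition kgraph_on :: "nat \<Rightarrow> nat set \<Rightarrow> nat set set \<Rightarrow> bool" where
  "kgraph_on k V H \<longleftrightarrow> (\<forall>e\<in>H. e \<subseteq> V \<and> card e = k)"

definition embeds :: "nat set \<Rightarrow> nat set set \<Rightarrow> nat set \<Rightarrow> nat set set \<Rightarrow> (nat \<Rightarrow> nat) \<Rightarrow> bool" where
  "embeds VF F V H \<phi> \<longleftrightarrow> inj_on \<phi> VF \<and> \<phi> ` VF \<subseteq> V \<and> (\<forall>e\<in>F. \<phi> ` e \<in> H)"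

definition has_disj_copies :: "nat \<Rightarrow> nat \<Rightarrow> nat set \<Rightarrow> nat set set \<Rightarrow> nat set set \<Rightarrow> bool" where
  "has_disj_copies s n VF F H \<longleftrightarrow>
     (\<exists>\<phi> :: nat \<Rightarrow> nat \<Rightarrow> nat.
        (\<forall>i<s. embeds VF F {0..<n} H (\<phi> i)) \<and>
        (\<forall>i<s. \<forall>j<s. i \<noteq> j \<longrightarrow> \<phi> i ` VF \<inter> \<phi> j ` VF = {}))"

definition exs :: "nat \<Rightarrow> nat \<Rightarrow> nat set \<Rightarrow> nat set set \<Rightarrow> nat \<Rightarrow> nat" where
  "exs n k VF F s = Max {card H | H. kgraph_on k {0..<n} H \<and> \<not> has_disj_copies s n VF F H}"

definition EXs :: "nat \<Rightarrow> nat \<Rightarrow> nat set \<Rightarrow> nat set set \<Rightarrow> nat \<Rightarrow> nat set set set" where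
  "EXs n k VF F s = {H. kgraph_on k {0..<n} H \<and> \<not> has_disj_copies s n VF F H \<and>
                        card H = exs n k VF F s}"

definition turan_density :: "nat \<Rightarrow> nat set \<Rightarrow> nat set set \<Rightarrow> real" where
  "turan_density k VF F = lim (\<lambda>n. real (exs n k VF F 1) / real (n choose k))"

text \<open>Suspension of an (r-1)-graph F on vertex set {0..<m-1}: new vertex m-1.\<close>
definition suspension :: "nat \<Rightarrow> nat set set \<Rightarrow> nat set set" where
  "suspension m F = (\<lambda>e. insert (m - 1) e) ` F"

text \<open>K_t^r join G, where G lives on {0..<n-t} and K_t^r on {n-t..<n}: G together with all
  r-subsets of {0..<n} meeting {n-t..<n}.\<close>
definition join_clique :: "nat \<Rightarrow> nat \<Rightarrow> nat \<Rightarrow> nat set set \<Rightarrow> nat set set" where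
  "join_clique r n t G = G \<union> {e. e \<subseteq> {0..<n} \<and> card e = r \<and> e \<inter> {n - t..<n} \<noteq> {}}"

end

theory Submission
  imports Defs
begin

(*
  Let H be an extremal n-vertex graph without t + 1 disjoint copies of the suspension F^ of F,
  and let \<delta> = 1 - m \<pi>(F), \<theta> = \<pi>(F) + \<delta>/(10m).  Joining t universal vertices to an extremal
  F^-free graph shows that H has at least e(K_t \<bowtie> EX(n - t, F^)) edges.

  If every vertex had degree below \<theta> binom(n-1, r-1), take a maximal packing of s \<le> t copies:
  outside its s m vertices H is F^-free, and since ex(a + 1, F^) \<le> ex(a, F^) + ex(a, F) with
  ex(a, F) < (\<pi>(F) + \<delta>/(20m)) binom(a, r-1), this gives at most
  ex(n - t, F^) + (1 - 9\<delta>/10) t binom(n-1, r-1) edges, too few.  So some vertex u has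
  degree at least \<theta> binom(n-1, r-1).  For t bounded by a small multiple of n, the link of u
  stays denser than the Turan bound after deleting any t copies avoiding u, so it contains F
  and u supports a further disjoint copy: H - u has no t disjoint copies.  Induction on t then
  bounds the size of H and shows that equality forces t vertices joined to everything.
*)

section \<open>Disjoint copies on arbitrary vertex sets\<close>

text \<open>Copies are counted inside an arbitrary vertex set V rather than {0..<n}, so that
  vertices can be deleted.\<close>
definition has_copies_on :: "nat \<Rightarrow> nat set \<Rightarrow> nat set set \<Rightarrow> nat set \<Rightarrow> nat set set \<Rightarrow> bool" where
  "has_copies_on s VF F V H \<longleftrightarrow> (\<exists>\<phi> :: nat \<Rightarrow> nat \<Rightarrow> nat.
     (\<forall>i<s. embeds VF F V H (\<phi> i)) \<and> (\<forall>i<s. \<forall>j<s. i \<noteq> j \<longrightarrow> \<phi> i ` VF \<inter> \<phi> j ` VF = {}))"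

lemma has_disj_copies_iff: "has_disj_copies s n VF F H \<longleftrightarrow> has_copies_on s VF F {0..<n} H"
  unfolding has_disj_copies_def has_copies_on_def ..

lemma has_copies_on_0 [simp]: "has_copies_on 0 VF F V H"
  unfolding has_copies_on_def by simp

lemma has_copies_on_1: "has_copies_on 1 VF F V H \<longleftrightarrow> (\<exists>\<psi>. embeds VF F V H \<psi>)"
proof
  assume "\<exists>\<psi>. embeds VF F V H \<psi>"
  then obtain \<psi> where "embeds VF F V H \<psi>" ..
  then show "has_copies_on 1 VF F V H" unfolding has_copies_on_def by (intro exI[of _ "\<lambda>_. \<psi>"]) simp
qed (auto simp: has_copies_on_def)

lemma has_copies_on_le: "has_copies_on s VF F V H \<Longrightarrow> s' \<le> s \<Longrightarrow> has_copies_on s' VF F V H"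
  unfolding has_copies_on_def by (elim exE, rule_tac x=\<phi> in exI) auto

lemma embeds_mono: "embeds VF F V H \<phi> \<Longrightarrow> V \<subseteq> V' \<Longrightarrow> H \<subseteq> H' \<Longrightarrow> embeds VF F V' H' \<phi>"
  unfolding embeds_def by auto

lemma has_copies_on_mono:
  "has_copies_on s VF F V H \<Longrightarrow> V \<subseteq> V' \<Longrightarrow> H \<subseteq> H' \<Longrightarrow> has_copies_on s VF F V' H'"
  unfolding has_copies_on_def by (elim exE conjE, rule_tac x=\<phi> in exI) (blast intro: embeds_mono)

lemma not_has_copies_on_empty:
  assumes "F \<noteq> {}" "0 < s"
  shows "\<not> has_copies_on s VF F V {}"
proof
  assume "has_copies_on s VF F V {}"
  then have "has_copies_on 1 VF F V {}" by (rule has_copies_on_le) (use assms(2) in simp)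
  then show False using assms(1) unfolding has_copies_on_1 embeds_def by auto
qed

lemma has_copies_on_Suc:
  assumes "\<forall>i<s. embeds VF F V H (\<phi> i)"
    and "\<forall>i<s. \<forall>j<s. i \<noteq> j \<longrightarrow> \<phi> i ` VF \<inter> \<phi> j ` VF = {}"
    and "embeds VF F V H \<psi>" and "\<forall>i<s. \<phi> i ` VF \<inter> \<psi> ` VF = {}"
  shows "has_copies_on (Suc s) VF F V H"
  unfolding has_copies_on_def
proof (intro exI[of _ "\<phi>(s := \<psi>)"] conjI allI impI)
  fix i j assume "i < Suc s" "j < Suc s" "i \<noteq> j"
  then consider "i < s" "j < s" | "i = s" "j < s" | "i < s" "j = s" by linarith
  then show "(\<phi>(s := \<psi>)) i ` VF \<inter> (\<phi>(s := \<psi>)) j ` VF = {}"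
    by cases (use assms(2,4) \<open>i \<noteq> j\<close> in \<open>auto simp: Int_commute\<close>)
next
  fix i assume "i < Suc s"
  then show "embeds VF F V H ((\<phi>(s := \<psi>)) i)" using assms(1,3) by (cases "i = s") auto
qed

lemma obtain_maximal_packing:
  assumes "\<not> has_copies_on (Suc t) VF F V H"
  obtains s where "s \<le> t" "has_copies_on s VF F V H" "\<not> has_copies_on (Suc s) VF F V H"
proof -
  define s where "s = (LEAST s. \<not> has_copies_on (Suc s) VF F V H)"
  have "\<not> has_copies_on (Suc s) VF F V H" unfolding s_def by (rule LeastI[of _ t]) (rule assms)
  moreover have "s \<le> t" unfolding s_def by (rule Least_le) (rule assms)
  moreover have "has_copies_on s VF F V H"
  proof (cases s)
    case (Suc s')
    then show ?thesis using not_less_Least[of s' "\<lambda>s. \<not> has_copies_on (Suc s) VF F V H"] s_def by auto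
  qed simp
  ultimately show ?thesis using that by blast
qed

lemma obtain_copies_support:
  assumes "has_copies_on s VF F V H" "finite VF"
  obtains U where "U \<subseteq> V" "card U = s * card VF"
    "\<And>\<psi> V' H'. V \<subseteq> V' \<Longrightarrow> H \<subseteq> H' \<Longrightarrow> embeds VF F V' H' \<psi> \<Longrightarrow> \<psi> ` VF \<inter> U = {}
       \<Longrightarrow> has_copies_on (Suc s) VF F V' H'"
proof -
  obtain \<phi> where emb: "\<forall>i<s. embeds VF F V H (\<phi> i)"
    and disj: "\<forall>i<s. \<forall>j<s. i \<noteq> j \<longrightarrow> \<phi> i ` VF \<inter> \<phi> j ` VF = {}"
    using assms(1) unfolding has_copies_on_def by blast
  define U where "U = (\<Union>i<s. \<phi> i ` VF)"
  show ?thesis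
  proof (rule that)
    show "U \<subseteq> V" using emb unfolding U_def embeds_def by blast
    have "card U = (\<Sum>i<s. card (\<phi> i ` VF))"
      unfolding U_def by (rule card_UN_disjoint) (use assms(2) disj in auto)
    also have "\<dots> = s * card VF"
      using emb by (simp add: embeds_def card_image)
    finally show "card U = s * card VF" .
  next
    fix \<psi> V' H' assume VH: "V \<subseteq> V'" "H \<subseteq> H'" and \<psi>: "embeds VF F V' H' \<psi>" "\<psi> ` VF \<inter> U = {}"
    have "\<forall>i<s. embeds VF F V' H' (\<phi> i)" using emb VH embeds_mono by blast
    moreover have "\<forall>i<s. \<phi> i ` VF \<inter> \<psi> ` VF = {}" using \<psi>(2) unfolding U_def by blast
    ultimately show "has_copies_on (Suc s) VF F V' H'" by (rule has_copies_on_Suc[OF _ disj \<psi>(1)])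
  qed
qed

lemma has_copies_on_no_edges:
  assumes "finite VF" "finite V" "s * card VF \<le> card V"
  shows "has_copies_on s VF {} V H"
  using assms(3)
proof (induction s)
  case (Suc s)
  have "has_copies_on s VF {} V H" using Suc by simp
  then obtain U where U: "U \<subseteq> V" "card U = s * card VF"
    and ext: "\<And>\<psi> V' H'. V \<subseteq> V' \<Longrightarrow> H \<subseteq> H' \<Longrightarrow> embeds VF {} V' H' \<psi> \<Longrightarrow> \<psi> ` VF \<inter> U = {}
       \<Longrightarrow> has_copies_on (Suc s) VF {} V' H'"
    using obtain_copies_support[OF _ assms(1)] by metis
  have "card VF \<le> card (V - U)"
    using Suc.prems U assms(2) by (simp add: card_Diff_subset finite_subset)
  then obtain \<psi> where "\<psi> ` VF \<subseteq> V - U" "inj_on \<psi> VF"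
    using card_le_inj[OF assms(1)] assms(2) by blast
  then show ?case by (intro ext[of V H]) (auto simp: embeds_def)
qed simp

section \<open>Extremal numbers on arbitrary vertex sets\<close>

lemma kgraph_on_subset_Pow: "kgraph_on k V H \<Longrightarrow> H \<subseteq> Pow V"
  unfolding kgraph_on_def by auto

lemma finite_kgraph_on: "finite V \<Longrightarrow> kgraph_on k V H \<Longrightarrow> finite H"
  by (meson finite_Pow_iff finite_subset kgraph_on_subset_Pow)

lemma kgraph_on_mono: "kgraph_on k V H \<Longrightarrow> V \<subseteq> V' \<Longrightarrow> kgraph_on k V' H"
  unfolding kgraph_on_def by blast

lemma kgraph_on_empty [simp]: "kgraph_on k V {}"
  unfolding kgraph_on_def by simp

definition free_graphs :: "nat \<Rightarrow> nat set \<Rightarrow> nat set set \<Rightarrow> nat \<Rightarrow> nat set \<Rightarrow> nat set set set" where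
  "free_graphs k VF F s V = {H. kgraph_on k V H \<and> \<not> has_copies_on s VF F V H}"

definition ex_on :: "nat \<Rightarrow> nat set \<Rightarrow> nat set set \<Rightarrow> nat \<Rightarrow> nat set \<Rightarrow> nat" where
  "ex_on k VF F s V = Max (card ` free_graphs k VF F s V)"

lemma exs_eq_ex_on: "exs n k VF F s = ex_on k VF F s {0..<n}"
  unfolding exs_def ex_on_def free_graphs_def has_disj_copies_iff by (simp add: setcompr_eq_image)

lemma finite_free_graphs: "finite V \<Longrightarrow> finite (free_graphs k VF F s V)"
  unfolding free_graphs_def
  by (rule finite_subset[of _ "Pow (Pow V)"]) (auto dest: kgraph_on_subset_Pow)

lemma card_le_ex_on:
  "finite V \<Longrightarrow> kgraph_on k V H \<Longrightarrow> \<not> has_copies_on s VF F V H \<Longrightarrow> card H \<le> ex_on k VF F s V"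
  unfolding ex_on_def by (rule Max_ge) (simp add: finite_free_graphs, simp add: free_graphs_def)

lemma obtain_extremal_graph:
  assumes "finite V" "F \<noteq> {}" "0 < s"
  obtains H where "kgraph_on k V H" "\<not> has_copies_on s VF F V H" "card H = ex_on k VF F s V"
proof -
  have "{} \<in> free_graphs k VF F s V"
    unfolding free_graphs_def using not_has_copies_on_empty[OF assms(2,3)] by simp
  then have "ex_on k VF F s V \<in> card ` free_graphs k VF F s V"
    unfolding ex_on_def using assms(1) by (intro Max_in) (auto simp: finite_free_graphs)
  then show ?thesis unfolding free_graphs_def by (auto intro: that)
qed

lemma embeds_image:
  assumes "inj_on \<sigma> V" "embeds VF F V H \<phi>"
  shows "embeds VF F (\<sigma> ` V) ((`) \<sigma> ` H) (\<sigma> \<circ> \<phi>)"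
proof -
  have \<phi>: "inj_on \<phi> VF" "\<phi> ` VF \<subseteq> V" "\<forall>e\<in>F. \<phi> ` e \<in> H" using assms(2) unfolding embeds_def by auto
  have "inj_on (\<sigma> \<circ> \<phi>) VF" using comp_inj_on[OF \<phi>(1) inj_on_subset[OF assms(1) \<phi>(2)]] .
  moreover have "(\<sigma> \<circ> \<phi>) ` VF \<subseteq> \<sigma> ` V" using \<phi>(2) by (auto simp: image_comp[symmetric])
  moreover have "\<forall>e\<in>F. (\<sigma> \<circ> \<phi>) ` e \<in> (`) \<sigma> ` H"
    using \<phi>(3) by (auto simp: image_comp[symmetric])
  ultimately show ?thesis unfolding embeds_def by blast
qed

lemma has_copies_on_image:
  assumes "inj_on \<sigma> V" "has_copies_on s VF F V H"
  shows "has_copies_on s VF F (\<sigma> ` V) ((`) \<sigma> ` H)"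
proof -
  obtain \<phi> where emb: "\<forall>i<s. embeds VF F V H (\<phi> i)"
    and disj: "\<forall>i<s. \<forall>j<s. i \<noteq> j \<longrightarrow> \<phi> i ` VF \<inter> \<phi> j ` VF = {}"
    using assms(2) unfolding has_copies_on_def by blast
  have "\<sigma> ` \<phi> i ` VF \<inter> \<sigma> ` \<phi> j ` VF = {}" if "i < s" "j < s" "i \<noteq> j" for i j
  proof -
    have "\<phi> i ` VF \<subseteq> V" "\<phi> j ` VF \<subseteq> V" using emb that(1,2) unfolding embeds_def by blast+
    then have "\<sigma> ` \<phi> i ` VF \<inter> \<sigma> ` \<phi> j ` VF = \<sigma> ` (\<phi> i ` VF \<inter> \<phi> j ` VF)"
      by (simp add: inj_on_image_Int[OF assms(1)])
    then show ?thesis using disj that by simp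
  qed
  then show ?thesis
    unfolding has_copies_on_def using emb embeds_image[OF assms(1)]
    by (intro exI[of _ "\<lambda>i. \<sigma> \<circ> \<phi> i"]) (simp add: image_comp)
qed

lemma kgraph_on_image: "inj_on \<sigma> V \<Longrightarrow> kgraph_on k V H \<Longrightarrow> kgraph_on k (\<sigma> ` V) ((`) \<sigma> ` H)"
  unfolding kgraph_on_def by (auto simp: card_image inj_on_subset)

lemma card_image_graph: "inj_on \<sigma> V \<Longrightarrow> H \<subseteq> Pow V \<Longrightarrow> card ((`) \<sigma> ` H) = card H"
  by (rule card_image[OF inj_on_subset[OF inj_on_image_Pow]])

lemma image_graph_inv_into:
  assumes "inj_on \<sigma> V" "H \<subseteq> Pow V"
  shows "(`) (inv_into V \<sigma>) ` (`) \<sigma> ` H = H"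
proof -
  have "(`) (inv_into V \<sigma>) ` (`) \<sigma> ` H = (\<lambda>e. inv_into V \<sigma> ` \<sigma> ` e) ` H"
    by (rule image_image)
  also have "\<dots> = (\<lambda>e. e) ` H"
    using inv_into_image_cancel[OF assms(1)] assms(2) by (intro image_cong) auto
  finally show ?thesis by (simp only: image_ident)
qed

lemma has_copies_on_image_iff:
  assumes "inj_on \<sigma> V" "kgraph_on k V H"
  shows "has_copies_on s VF F (\<sigma> ` V) ((`) \<sigma> ` H) \<longleftrightarrow> has_copies_on s VF F V H"
proof
  assume "has_copies_on s VF F (\<sigma> ` V) ((`) \<sigma> ` H)"
  from has_copies_on_image[OF inj_on_inv_into[of "\<sigma> ` V" \<sigma> V] this]
  show "has_copies_on s VF F V H"
    using image_graph_inv_into[OF assms(1) kgraph_on_subset_Pow[OF assms(2)]] assms(1) by simp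
qed (rule has_copies_on_image[OF assms(1)])

lemma card_image_free_graphs:
  assumes "inj_on \<sigma> V"
  shows "card ` free_graphs k VF F s (\<sigma> ` V) \<subseteq> card ` free_graphs k VF F s V"
proof
  fix x assume "x \<in> card ` free_graphs k VF F s (\<sigma> ` V)"
  then obtain H where H: "kgraph_on k (\<sigma> ` V) H" "\<not> has_copies_on s VF F (\<sigma> ` V) H" "x = card H"
    unfolding free_graphs_def by blast
  let ?\<tau> = "inv_into V \<sigma>"
  have \<tau>: "inj_on ?\<tau> (\<sigma> ` V)" "?\<tau> ` \<sigma> ` V = V" using assms by (auto simp: inj_on_inv_into)
  have "(`) ?\<tau> ` H \<in> free_graphs k VF F s V"
    using kgraph_on_image[OF \<tau>(1) H(1)] has_copies_on_image_iff[OF \<tau>(1) H(1)] H(2) \<tau>(2)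
    unfolding free_graphs_def by simp
  moreover have "card ((`) ?\<tau> ` H) = x"
    using card_image_graph[OF \<tau>(1) kgraph_on_subset_Pow[OF H(1)]] H(3) by simp
  ultimately show "x \<in> card ` free_graphs k VF F s V" by blast
qed

lemma ex_on_image:
  assumes "inj_on \<sigma> V"
  shows "ex_on k VF F s (\<sigma> ` V) = ex_on k VF F s V"
proof -
  have "inj_on (inv_into V \<sigma>) (\<sigma> ` V)" "inv_into V \<sigma> ` \<sigma> ` V = V"
    using assms by (auto simp: inj_on_inv_into)
  then have "card ` free_graphs k VF F s V \<subseteq> card ` free_graphs k VF F s (\<sigma> ` V)"
    using card_image_free_graphs[of "inv_into V \<sigma>" "\<sigma> ` V"] by simp
  with card_image_free_graphs[OF assms] show ?thesis
    unfolding ex_on_def by (metis subset_antisym)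
qed

lemma ex_on_eq_exs_card:
  assumes "finite V"
  shows "ex_on k VF F s V = exs (card V) k VF F s"
proof -
  obtain h where "bij_betw h V {0..<card V}" using ex_bij_betw_finite_nat[OF assms] ..
  then show ?thesis
    using ex_on_image[of h V] by (simp add: bij_betw_def exs_eq_ex_on)
qed

section \<open>Turan density\<close>

lemma sum_card_edges_avoiding:
  assumes "finite V" "finite H"
  shows "(\<Sum>v\<in>V. card {e\<in>H. v \<notin> e}) = (\<Sum>e\<in>H. card (V - e))"
proof -
  have "(\<Sum>v\<in>V. card {e\<in>H. v \<notin> e}) = (\<Sum>v\<in>V. \<Sum>e\<in>H. if v \<notin> e then 1 else 0)"
    using assms by (simp add: sum.inter_filter[symmetric])
  also have "\<dots> = (\<Sum>e\<in>H. \<Sum>v\<in>V. if v \<notin> e then 1 else 0)" by (rule sum.swap)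
  also have "\<dots> = (\<Sum>e\<in>H. card (V - e))"
    using assms by (simp add: sum.inter_filter[symmetric] set_diff_eq)
  finally show ?thesis .
qed

text \<open>Averaging over the n + 1 vertex-deleted subgraphs of an extremal graph.\<close>
lemma exs_Suc_mult_le:
  assumes "F \<noteq> {}"
  shows "exs (Suc n) k VF F 1 * (Suc n - k) \<le> Suc n * exs n k VF F 1"
proof -
  let ?V = "{0..<Suc n}"
  obtain H where H: "kgraph_on k ?V H" "\<not> has_copies_on 1 VF F ?V H" "card H = exs (Suc n) k VF F 1"
    using obtain_extremal_graph[of ?V F 1 k VF] assms by (auto simp: exs_eq_ex_on)
  have avoiding: "card {e\<in>H. v \<notin> e} \<le> exs n k VF F 1" if "v \<in> ?V" for v
  proof -
    have "kgraph_on k (?V - {v}) {e\<in>H. v \<notin> e}" using H(1) unfolding kgraph_on_def by auto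
    moreover have "\<not> has_copies_on 1 VF F (?V - {v}) {e\<in>H. v \<notin> e}"
      using H(2) has_copies_on_mono[of 1 VF F "?V - {v}" "{e\<in>H. v \<notin> e}" ?V H] by blast
    ultimately show ?thesis
      using card_le_ex_on[of "?V - {v}"] ex_on_eq_exs_card[of "?V - {v}"] that by simp
  qed
  have "(\<Sum>e\<in>H. card (?V - e)) = (\<Sum>e\<in>H. Suc n - k)"
    by (rule sum.cong) (use H(1) in \<open>auto simp: kgraph_on_def card_Diff_subset finite_subset\<close>)
  then have "card H * (Suc n - k) = (\<Sum>e\<in>H. card (?V - e))" by simp
  also have "\<dots> = (\<Sum>v\<in>?V. card {e\<in>H. v \<notin> e})"
    using sum_card_edges_avoiding[of ?V H] finite_kgraph_on[OF _ H(1)] by simp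
  also have "\<dots> \<le> Suc n * exs n k VF F 1"
    using sum_mono[of ?V "\<lambda>v. card {e\<in>H. v \<notin> e}" "\<lambda>_. exs n k VF F 1"] avoiding by simp
  finally show ?thesis using H(3) by simp
qed

lemma exs_density_Suc_le:
  assumes "k \<le> n" "finite VF" "card VF \<le> n"
  shows "real (exs (Suc n) k VF F 1) / real (Suc n choose k) \<le> real (exs n k VF F 1) / real (n choose k)"
proof (cases "F = {}")
  case True
  \<comment> \<open>no graph on at least card VF vertices is free, so both sides use the junk value Max {}\<close>
  have "free_graphs k VF F 1 {0..<n'} = {}" if "n \<le> n'" for n'
    using has_copies_on_no_edges[of VF "{0..<n'}" 1] True assms(2,3) that
    by (auto simp: free_graphs_def)
  then have "exs (Suc n) k VF F 1 = exs n k VF F 1" by (simp add: exs_eq_ex_on ex_on_def)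
  then show ?thesis
    by (simp only:) (rule divide_left_mono, use assms(1) in \<open>simp_all add: binomial_right_mono\<close>)
next
  case False
  have "(Suc n - k) * (Suc n choose k) = Suc n * (n choose k)"
    using binomial_absorb_comp[of "Suc n" k] by simp
  then have "exs (Suc n) k VF F 1 * (n choose k) * Suc n = exs (Suc n) k VF F 1 * (Suc n - k) * (Suc n choose k)"
    by (metis mult.assoc mult.commute)
  also have "\<dots> \<le> Suc n * exs n k VF F 1 * (Suc n choose k)"
    using exs_Suc_mult_le[OF False] by (rule mult_right_mono) simp
  finally have "exs (Suc n) k VF F 1 * (n choose k) * Suc n \<le> exs n k VF F 1 * (Suc n choose k) * Suc n"
    by (simp only: ac_simps)
  then have "real (exs (Suc n) k VF F 1) * real (n choose k) \<le> real (exs n k VF F 1) * real (Suc n choose k)"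
    by (metis mult_le_cancel2 of_nat_le_iff of_nat_mult zero_less_Suc)
  then show ?thesis using assms(1) by (simp add: divide_simps)
qed

lemma turan_density_tendsto:
  assumes "finite VF"
  shows "(\<lambda>n. real (exs n k VF F 1) / real (n choose k)) \<longlonglongrightarrow> turan_density k VF F"
    and "0 \<le> turan_density k VF F"
proof -
  define a where "a = (\<lambda>n. real (exs n k VF F 1) / real (n choose k))"
  define N where "N = max k (card VF)"
  have "decseq (\<lambda>i. a (i + N))"
  proof (rule decseq_SucI)
    fix i show "a (Suc i + N) \<le> a (i + N)"
      unfolding a_def using exs_density_Suc_le[of k "i + N" VF F] assms by (simp add: N_def)
  qed
  then obtain L where L: "(\<lambda>i. a (i + N)) \<longlonglongrightarrow> L"
    using decseq_convergent[of "\<lambda>i. a (i + N)" 0] by (auto simp: a_def)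
  then have "a \<longlonglongrightarrow> L" by (rule LIMSEQ_offset)
  moreover have "turan_density k VF F = L"
    unfolding turan_density_def a_def[symmetric] using limI[OF \<open>a \<longlonglongrightarrow> L\<close>] .
  ultimately show "(\<lambda>n. real (exs n k VF F 1) / real (n choose k)) \<longlonglongrightarrow> turan_density k VF F"
    by (simp add: a_def)
  show "0 \<le> turan_density k VF F"
    using \<open>a \<longlonglongrightarrow> L\<close> \<open>turan_density k VF F = L\<close> by (simp add: LIMSEQ_le_const a_def)
qed

lemma eventually_exs_less_turan_density:
  assumes "finite VF" "0 < \<epsilon>"
  shows "\<forall>\<^sub>F n in sequentially. real (exs n k VF F 1) < (turan_density k VF F + \<epsilon>) * real (n choose k)"
proof -
  have "\<forall>\<^sub>F n in sequentially. real (exs n k VF F 1) / real (n choose k) < turan_density k VF F + \<epsilon>"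
    using order_tendstoD(2)[OF turan_density_tendsto(1)[OF assms(1)]] assms(2) by simp
  moreover have "\<forall>\<^sub>F n in sequentially. 0 < real (n choose k)"
    using eventually_ge_at_top[of k] by eventually_elim simp
  ultimately show ?thesis by eventually_elim (simp add: divide_less_eq)
qed

section \<open>Degrees, links and binomial estimates\<close>

definition deg :: "nat set set \<Rightarrow> nat \<Rightarrow> nat" where
  "deg H v = card {e\<in>H. v \<in> e}"

definition link :: "nat set set \<Rightarrow> nat \<Rightarrow> nat set \<Rightarrow> nat set set" where
  "link H u W = {f. f \<subseteq> W \<and> insert u f \<in> H}"

lemma card_eq_card_avoiding_plus_deg: "finite H \<Longrightarrow> card H = card {e\<in>H. v \<notin> e} + deg H v"
  unfolding deg_def by (subst card_Un_disjoint[symmetric]) (auto intro: arg_cong[of _ _ card])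

lemma kgraph_on_link:
  assumes "kgraph_on k V H" "finite V" "v \<notin> W" "W \<subseteq> V"
  shows "kgraph_on (k - 1) W (link H v W)"
  unfolding kgraph_on_def
proof
  fix f assume f: "f \<in> link H v W"
  then have "f \<subseteq> W" "insert v f \<in> H" unfolding link_def by auto
  moreover have "finite f" using \<open>f \<subseteq> W\<close> assms(4) by (intro rev_finite_subset[OF assms(2)]) auto
  moreover have "v \<notin> f" using \<open>f \<subseteq> W\<close> assms(3) by blast
  moreover have "card (insert v f) = k" using \<open>insert v f \<in> H\<close> assms(1) unfolding kgraph_on_def by blast
  ultimately show "f \<subseteq> W \<and> card f = k - 1" by simp
qed

lemma deg_eq_card_link:
  assumes "kgraph_on k V H" "v \<in> V"
  shows "deg H v = card (link H v (V - {v}))"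
proof -
  have "bij_betw (\<lambda>e. e - {v}) {e\<in>H. v \<in> e} (link H v (V - {v}))"
  proof (rule bij_betw_byWitness[where f' = "insert v"])
    show "(\<lambda>e. e - {v}) ` {e\<in>H. v \<in> e} \<subseteq> link H v (V - {v})"
      using assms(1) unfolding link_def kgraph_on_def by (auto simp: insert_absorb)
  qed (auto simp: link_def insert_absorb)
  then show ?thesis unfolding deg_def by (rule bij_betw_same_card)
qed

lemma card_subsets_containing_le:
  assumes "finite S" "w \<in> S"
  shows "card {f. f \<subseteq> S \<and> card f = k \<and> w \<in> f} \<le> (card S - 1) choose (k - 1)"
proof -
  have "{f. f \<subseteq> S \<and> card f = k \<and> w \<in> f} \<subseteq> insert w ` {g. g \<subseteq> S - {w} \<and> card g = k - 1}"
  proof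
    fix f assume f: "f \<in> {f. f \<subseteq> S \<and> card f = k \<and> w \<in> f}"
    then have "finite f" using rev_finite_subset[OF assms(1)] by blast
    then have "card (f - {w}) = k - 1" "f = insert w (f - {w})" using f by auto
    then show "f \<in> insert w ` {g. g \<subseteq> S - {w} \<and> card g = k - 1}" using f by blast
  qed
  then have "card {f. f \<subseteq> S \<and> card f = k \<and> w \<in> f} \<le> card (insert w ` {g. g \<subseteq> S - {w} \<and> card g = k - 1})"
    by (rule card_mono[rotated]) (simp add: assms(1))
  also have "\<dots> \<le> card {g. g \<subseteq> S - {w} \<and> card g = k - 1}" by (rule card_image_le) (simp add: assms(1))
  also have "\<dots> = (card S - 1) choose (k - 1)" using assms by (simp add: n_subsets)
  finally show ?thesis .
qed

lemma deg_le_choose: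
  assumes "kgraph_on r V H" "finite V" "u \<in> V"
  shows "deg H u \<le> (card V - 1) choose (r - 1)"
proof -
  have "link H u (V - {u}) \<subseteq> {f. f \<subseteq> V - {u} \<and> card f = r - 1}"
    using kgraph_on_link[OF assms(1,2), of u "V - {u}"] unfolding kgraph_on_def by auto
  then have "card (link H u (V - {u})) \<le> card {f. f \<subseteq> V - {u} \<and> card f = r - 1}"
    by (rule card_mono[rotated]) (simp add: assms(2))
  also have "\<dots> = card (V - {u}) choose (r - 1)" using assms(2) by (simp add: n_subsets)
  finally show ?thesis using deg_eq_card_link[OF assms(1,3)] assms(2,3) by simp
qed

lemma deg_le_card_link_plus:
  assumes H: "kgraph_on r V H" "finite V" "u \<in> V" and W: "W \<subseteq> V - {u}"
  shows "deg H u \<le> card (link H u (V - {u} - W)) + card W * ((card V - 2) choose (r - 2))"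
proof -
  define S where "S w = {f. f \<subseteq> V - {u} \<and> card f = r - 1 \<and> w \<in> f}" for w
  have finW: "finite W" using W by (intro rev_finite_subset[OF H(2)]) auto
  have cover: "link H u (V - {u}) \<subseteq> link H u (V - {u} - W) \<union> (\<Union>w\<in>W. S w)"
    using kgraph_on_link[OF H(1,2), of u "V - {u}"] unfolding link_def S_def kgraph_on_def by blast
  have "kgraph_on (r - 1) (V - {u} - W) (link H u (V - {u} - W))"
    by (rule kgraph_on_link[OF H(1,2)]) auto
  then have finL: "finite (link H u (V - {u} - W))" by (rule finite_kgraph_on[rotated]) (simp add: H(2))
  have finS: "finite (S w)" for w unfolding S_def using H(2) by simp
  have "card (link H u (V - {u})) \<le> card (link H u (V - {u} - W) \<union> (\<Union>w\<in>W. S w))"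
    by (rule card_mono[OF _ cover]) (simp add: finL finS finW)
  also have "\<dots> \<le> card (link H u (V - {u} - W)) + card (\<Union>w\<in>W. S w)" by (rule card_Un_le)
  also have "card (\<Union>w\<in>W. S w) \<le> (\<Sum>w\<in>W. card (S w))" by (rule card_UN_le[OF finW])
  finally have "card (link H u (V - {u})) \<le> card (link H u (V - {u} - W)) + (\<Sum>w\<in>W. card (S w))"
    by simp
  moreover have "card (S w) \<le> (card V - 2) choose (r - 2)" if "w \<in> W" for w
  proof -
    have "w \<in> V - {u}" using that W by blast
    then show ?thesis using card_subsets_containing_le[of "V - {u}" w "r - 1"] H(2,3)
      by (simp add: S_def numeral_2_eq_2 diff_diff_add)
  qed
  then have "(\<Sum>w\<in>W. card (S w)) \<le> card W * ((card V - 2) choose (r - 2))"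
    using sum_bounded_above[of W "\<lambda>w. card (S w)"] by simp
  ultimately show ?thesis using deg_eq_card_link[OF H(1,3)] by linarith
qed

lemma full_deg_imp_edges:
  assumes H: "kgraph_on r V H" "finite V" "u \<in> V" and deg: "deg H u = (card V - 1) choose (r - 1)"
    and e: "e \<subseteq> V" "card e = r" "u \<in> e"
  shows "e \<in> H"
proof -
  let ?S = "{f. f \<subseteq> V - {u} \<and> card f = r - 1}"
  have "link H u (V - {u}) \<subseteq> ?S"
    using kgraph_on_link[OF H(1,2), of u "V - {u}"] unfolding kgraph_on_def by auto
  moreover have "card (link H u (V - {u})) = card ?S"
    using deg deg_eq_card_link[OF H(1,3)] H(2,3) by (simp add: n_subsets)
  ultimately have "link H u (V - {u}) = ?S" using H(2) by (simp add: card_subset_eq)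
  moreover have "e - {u} \<in> ?S" using e rev_finite_subset[OF H(2) e(1)] by auto
  ultimately have "insert u (e - {u}) \<in> H" unfolding link_def by blast
  then show ?thesis using e(3) by (simp add: insert_absorb)
qed

lemma choose_le_choose_diff_plus:
  assumes "1 \<le> k" "j \<le> a"
  shows "a choose k \<le> ((a - j) choose k) + j * ((a - 1) choose (k - 1))"
  using assms(2)
proof (induction j)
  case (Suc j)
  obtain b where b: "a - j = Suc b" using Suc.prems by (cases "a - j") auto
  obtain k' where k': "k = Suc k'" using assms(1) by (cases k) auto
  have "a - j choose k = (b choose k) + (b choose k')" using b k' by simp
  moreover have "b choose k' \<le> (a - 1) choose (k - 1)" using b k' by (simp add: binomial_right_mono)
  moreover have "a - Suc j = b" using b by simp
  ultimately show ?case using Suc by simp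
qed simp

lemma choose_plus_mult_le_choose_add:
  assumes "1 \<le> r"
  shows "(b choose r) + j * (b choose (r - 1)) \<le> (b + j) choose r"
proof (induction j)
  case (Suc j)
  obtain r' where r': "r = Suc r'" using assms by (cases r) auto
  have "b choose r' \<le> (b + j) choose r'" by (simp add: binomial_right_mono)
  then show ?case using Suc.IH r' by simp
qed simp

definition meeting :: "nat \<Rightarrow> nat set \<Rightarrow> nat set \<Rightarrow> nat set set" where
  "meeting r V T = {e. e \<subseteq> V \<and> card e = r \<and> e \<inter> T \<noteq> {}}"

definition num_meeting :: "nat \<Rightarrow> nat \<Rightarrow> nat \<Rightarrow> nat" where
  "num_meeting r n t = (n choose r) - ((n - t) choose r)"

lemma card_meeting:
  assumes "finite V" "T \<subseteq> V"
  shows "card (meeting r V T) = num_meeting r (card V) (card T)"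
proof -
  have "meeting r V T = {e. e \<subseteq> V \<and> card e = r} - {e. e \<subseteq> V - T \<and> card e = r}"
    unfolding meeting_def by blast
  moreover have "{e. e \<subseteq> V - T \<and> card e = r} \<subseteq> {e. e \<subseteq> V \<and> card e = r}" by blast
  moreover have "card (V - T) = card V - card T" using assms by (simp add: card_Diff_subset finite_subset)
  ultimately show ?thesis
    using assms(1) unfolding num_meeting_def by (simp add: card_Diff_subset n_subsets)
qed

lemma num_meeting_Suc:
  assumes "1 \<le> r" "1 \<le> n"
  shows "num_meeting r n (Suc t) = num_meeting r (n - 1) t + ((n - 1) choose (r - 1))"
proof -
  obtain n' r' where "n = Suc n'" "r = Suc r'" using assms by (metis Suc_le_D One_nat_def)
  moreover have "(n' - t) choose r \<le> n' choose r" by (rule binomial_right_mono) simp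
  ultimately show ?thesis unfolding num_meeting_def by simp
qed

lemma mult_choose_le_num_meeting:
  assumes "1 \<le> r" "t \<le> n"
  shows "t * ((n - t) choose (r - 1)) \<le> num_meeting r n t"
  using choose_plus_mult_le_choose_add[OF assms(1), of "n - t" t] assms(2) unfolding num_meeting_def by simp

section \<open>Suspensions\<close>

lemma embeds_suspension_of_link:
  assumes m: "1 \<le> m" and u: "u \<notin> W" and F: "kgraph_on k {0..<m - 1} F"
    and \<psi>: "embeds {0..<m - 1} F W (link H u W) \<psi>"
  shows "embeds {0..<m} (suspension m F) (insert u W) H (\<psi>(m - 1 := u))"
proof -
  let ?\<psi>' = "\<psi>(m - 1 := u)"
  have split: "{0..<m} = insert (m - 1) {0..<m - 1}" using m by (cases m) auto
  have \<psi>': "?\<psi>' ` A = \<psi> ` A" if "A \<subseteq> {0..<m - 1}" for A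
    using that by (intro image_cong) auto
  have "inj_on ?\<psi>' {0..<m}" "?\<psi>' ` {0..<m} \<subseteq> insert u W"
    using \<psi> u \<psi>'[of "{0..<m - 1}"] unfolding split embeds_def by (auto simp: inj_on_def)
  moreover have "?\<psi>' ` insert (m - 1) e \<in> H" if "e \<in> F" for e
  proof -
    have "e \<subseteq> {0..<m - 1}" using F that unfolding kgraph_on_def by blast
    have "?\<psi>' ` insert (m - 1) e = insert u (?\<psi>' ` e)" by (simp only: image_insert fun_upd_same)
    also have "?\<psi>' ` e = \<psi> ` e" using \<open>e \<subseteq> {0..<m - 1}\<close> by (rule \<psi>')
    finally have "?\<psi>' ` insert (m - 1) e = insert u (\<psi> ` e)" .
    moreover have "\<psi> ` e \<in> link H u W" using \<psi> that unfolding embeds_def by blast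
    ultimately show ?thesis unfolding link_def by simp
  qed
  ultimately show ?thesis unfolding embeds_def suspension_def by blast
qed

text \<open>An extremal graph splits into the edges avoiding the last vertex and the link of that
  vertex, which must be free of F.\<close>
lemma exs_suspension_Suc_le:
  assumes m: "1 \<le> m" and F: "kgraph_on k {0..<m - 1} F" "F \<noteq> {}"
  shows "exs (Suc a) r {0..<m} (suspension m F) 1
    \<le> exs a r {0..<m} (suspension m F) 1 + exs a (r - 1) {0..<m - 1} F 1"
proof -
  let ?V = "{0..<Suc a}" and ?Fh = "suspension m F"
  have "?Fh \<noteq> {}" using F(2) unfolding suspension_def by simp
  then obtain G where G: "kgraph_on r ?V G" "\<not> has_copies_on 1 {0..<m} ?Fh ?V G"
    "card G = exs (Suc a) r {0..<m} ?Fh 1"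
    using obtain_extremal_graph[of ?V ?Fh 1 r "{0..<m}"] by (auto simp: exs_eq_ex_on)
  have V: "?V - {a} = {0..<a}" by auto
  have "kgraph_on r (?V - {a}) {e\<in>G. a \<notin> e}" using G(1) unfolding kgraph_on_def by auto
  then have "kgraph_on r {0..<a} {e\<in>G. a \<notin> e}" by (simp only: V)
  moreover have "\<not> has_copies_on 1 {0..<m} ?Fh {0..<a} {e\<in>G. a \<notin> e}"
    using G(2) has_copies_on_mono[of 1 "{0..<m}" ?Fh "{0..<a}" "{e\<in>G. a \<notin> e}" ?V G] by auto
  ultimately have avoid: "card {e\<in>G. a \<notin> e} \<le> exs a r {0..<m} ?Fh 1"
    using card_le_ex_on exs_eq_ex_on by (metis finite_atLeastLessThan)
  have "kgraph_on (r - 1) {0..<a} (link G a {0..<a})"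
    using kgraph_on_link[OF G(1)] by (metis V finite_atLeastLessThan Diff_subset Diff_iff singletonI)
  moreover have "\<not> has_copies_on 1 {0..<m - 1} F {0..<a} (link G a {0..<a})"
  proof
    assume "has_copies_on 1 {0..<m - 1} F {0..<a} (link G a {0..<a})"
    then obtain \<psi> where "embeds {0..<m - 1} F {0..<a} (link G a {0..<a}) \<psi>"
      unfolding has_copies_on_1 ..
    from embeds_suspension_of_link[OF m _ F(1) this]
    have "embeds {0..<m} ?Fh ?V G (\<psi>(m - 1 := a))" by (simp add: atLeast0_lessThan_Suc)
    then have "has_copies_on 1 {0..<m} ?Fh ?V G" unfolding has_copies_on_1 by blast
    with G(2) show False ..
  qed
  ultimately have "card (link G a {0..<a}) \<le> exs a (r - 1) {0..<m - 1} F 1"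
    using card_le_ex_on exs_eq_ex_on by (metis finite_atLeastLessThan)
  moreover have "card G = card {e\<in>G. a \<notin> e} + card (link G a {0..<a})"
    using card_eq_card_avoiding_plus_deg[OF finite_kgraph_on[OF _ G(1)], of a]
      deg_eq_card_link[OF G(1), of a] V by simp
  ultimately show ?thesis using G(3) avoid by linarith
qed

text \<open>A copy using a vertex a that lies on no edge of G can be moved off a, because the
  vertex of F sent to a is then isolated in F.\<close>
lemma embeds_avoiding_vertex:
  assumes \<phi>: "embeds VF F (insert a V) G \<phi>" and G: "G \<subseteq> Pow V"
    and fin: "finite V" "finite VF" and card: "card VF \<le> card V"
  shows "\<exists>\<psi>. embeds VF F V G \<psi>"
proof (cases "a \<in> \<phi> ` VF - V")
  case False
  then show ?thesis using \<phi> unfolding embeds_def by blast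
next
  case True
  then obtain j where j: "j \<in> VF" "\<phi> j = a" "a \<notin> V" by blast
  have inj: "inj_on \<phi> VF" and img: "\<phi> ` VF \<subseteq> insert a V" and edges: "\<forall>e\<in>F. \<phi> ` e \<in> G"
    using \<phi> unfolding embeds_def by auto
  have "\<phi> ` VF \<inter> V \<subset> \<phi> ` VF" using j by blast
  then have "card (\<phi> ` VF \<inter> V) < card VF"
    using psubset_card_mono[of "\<phi> ` VF"] fin(2) card_image[OF inj] by simp
  moreover have "card V \<le> card (\<phi> ` VF \<inter> V)" if "V \<subseteq> \<phi> ` VF \<inter> V"
    using that by (rule card_mono[rotated]) (simp add: fin)
  ultimately have "\<not> V \<subseteq> \<phi> ` VF \<inter> V" using card by linarith
  then obtain y where y: "y \<in> V" "y \<notin> \<phi> ` VF" by blast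
  have "j \<notin> e" if "e \<in> F" for e using edges that G j by blast
  then have "\<phi>(j := y) ` e = \<phi> ` e" if "e \<in> F" for e using that by (intro image_cong) auto
  moreover have "inj_on (\<phi>(j := y)) VF" using inj y(2) by (rule inj_on_fun_updI)
  moreover have "\<phi>(j := y) ` VF \<subseteq> V"
  proof
    fix x assume "x \<in> \<phi>(j := y) ` VF"
    then obtain i where "i \<in> VF" "x = (\<phi>(j := y)) i" by blast
    then show "x \<in> V" using img y(1) inj j unfolding inj_on_def by (cases "i = j") auto
  qed
  ultimately show ?thesis using edges unfolding embeds_def by (intro exI[of _ "\<phi>(j := y)"]) simp
qed

lemma exs_le_exs_Suc:
  assumes "F \<noteq> {}" "finite VF" "card VF \<le> a"
  shows "exs a k VF F 1 \<le> exs (Suc a) k VF F 1"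
proof -
  obtain G where G: "kgraph_on k {0..<a} G" "\<not> has_copies_on 1 VF F {0..<a} G"
    "card G = exs a k VF F 1"
    using obtain_extremal_graph[of "{0..<a}" F 1 k VF] assms(1) by (auto simp: exs_eq_ex_on)
  have "kgraph_on k {0..<Suc a} G" using G(1) by (rule kgraph_on_mono) auto
  moreover have "\<not> has_copies_on 1 VF F {0..<Suc a} G"
  proof
    assume "has_copies_on 1 VF F {0..<Suc a} G"
    then obtain \<phi> where "embeds VF F (insert a {0..<a}) G \<phi>"
      unfolding has_copies_on_1 atLeast0_lessThan_Suc ..
    from embeds_avoiding_vertex[OF this kgraph_on_subset_Pow[OF G(1)]] assms(2,3)
    have "has_copies_on 1 VF F {0..<a} G" unfolding has_copies_on_1 by simp
    with G(2) show False ..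
  qed
  ultimately have "card G \<le> ex_on k VF F 1 {0..<Suc a}" by (rule card_le_ex_on[OF finite_atLeastLessThan])
  then show ?thesis using G(3) by (simp add: exs_eq_ex_on)
qed

lemma exs_mono:
  assumes "F \<noteq> {}" "finite VF" "card VF \<le> a" "a \<le> b"
  shows "exs a k VF F 1 \<le> exs b k VF F 1"
  using assms(4)
proof (induction b rule: dec_induct)
  case (step b)
  then show ?case using exs_le_exs_Suc[OF assms(1,2), of b k] assms(3) by simp
qed simp

lemma card_le_exs_plus_degrees:
  assumes fin: "finite V" "finite VF" and H: "kgraph_on k V H"
    and s: "has_copies_on s VF F V H" "\<not> has_copies_on (Suc s) VF F V H"
    and deg: "\<And>u. u \<in> V \<Longrightarrow> real (deg H u) \<le> D"
  shows "real (card H) \<le> real (exs (card V - s * card VF) k VF F 1) + real (s * card VF) * D"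
proof -
  obtain U where U: "U \<subseteq> V" "card U = s * card VF"
    and ext: "\<And>\<psi> V' H'. V \<subseteq> V' \<Longrightarrow> H \<subseteq> H' \<Longrightarrow> embeds VF F V' H' \<psi> \<Longrightarrow> \<psi> ` VF \<inter> U = {}
      \<Longrightarrow> has_copies_on (Suc s) VF F V' H'"
    using obtain_copies_support[OF s(1) fin(2)] by metis
  define HU where "HU = {e\<in>H. e \<inter> U = {}}"
  have "kgraph_on k (V - U) HU" using H unfolding HU_def kgraph_on_def by auto
  moreover have "\<not> has_copies_on 1 VF F (V - U) HU"
  proof
    assume "has_copies_on 1 VF F (V - U) HU"
    then obtain \<psi> where \<psi>: "embeds VF F (V - U) HU \<psi>" unfolding has_copies_on_1 ..
    then have "embeds VF F V H \<psi>" by (rule embeds_mono) (auto simp: HU_def)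
    moreover have "\<psi> ` VF \<inter> U = {}" using \<psi> unfolding embeds_def by blast
    ultimately show False using ext[of V H \<psi>] s(2) by blast
  qed
  ultimately have "card HU \<le> exs (card (V - U)) k VF F 1"
    using card_le_ex_on ex_on_eq_exs_card fin(1) by (metis finite_Diff)
  also have "card (V - U) = card V - s * card VF" using U fin(1) by (simp add: card_Diff_subset finite_subset)
  finally have HU_le: "card HU \<le> exs (card V - s * card VF) k VF F 1" .
  have finU: "finite U" using U(1) fin(1) by (rule rev_finite_subset[rotated])
  have "H \<subseteq> HU \<union> (\<Union>u\<in>U. {e\<in>H. u \<in> e})" unfolding HU_def by blast
  then have "card H \<le> card (HU \<union> (\<Union>u\<in>U. {e\<in>H. u \<in> e}))"
    by (rule card_mono[rotated]) (use finU finite_kgraph_on[OF fin(1) H] in \<open>simp add: HU_def\<close>)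
  also have "\<dots> \<le> card HU + card (\<Union>u\<in>U. {e\<in>H. u \<in> e})" by (rule card_Un_le)
  also have "card (\<Union>u\<in>U. {e\<in>H. u \<in> e}) \<le> (\<Sum>u\<in>U. deg H u)"
    unfolding deg_def by (rule card_UN_le[OF finU])
  finally have "real (card H) \<le> real (card HU + (\<Sum>u\<in>U. deg H u))" by (simp only: of_nat_le_iff)
  also have "\<dots> = real (card HU) + (\<Sum>u\<in>U. real (deg H u))" by simp
  also have "(\<Sum>u\<in>U. real (deg H u)) \<le> real (card U) * D"
    using sum_bounded_above[of U "\<lambda>u. real (deg H u)" D] deg U(1) by auto
  finally show ?thesis using HU_le U(2) by simp
qed

section \<open>The stability argument\<close>

lemma bound_clear_denominators:
  assumes "real t \<le> d / (40 * real m ^ 2) * (real (n - 1) / real (r - 1))" "1 \<le> m" "2 \<le> r"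
  shows "real t * real (r - 1) * 40 * real m ^ 2 \<le> d * real (n - 1)"
proof -
  have pos: "0 < 40 * real m ^ 2 * real (r - 1)" using assms(2,3) by simp
  have "d / (40 * real m ^ 2) * (real (n - 1) / real (r - 1)) = d * real (n - 1) / (40 * real m ^ 2 * real (r - 1))"
    by (simp add: field_simps)
  then have "real t * (40 * real m ^ 2 * real (r - 1)) \<le> d * real (n - 1)"
    using assms(1) pos_le_divide_eq[OF pos] by simp
  then show ?thesis by (simp add: algebra_simps)
qed

lemma bound_imp_tm_le:
  assumes "real t * real (r - 1) * 40 * real m ^ 2 \<le> d * real (n - 1)" "d \<le> 1" "1 \<le> m" "2 \<le> r"
  shows "40 * (t * m) \<le> n - 1"
proof -
  have "1 \<le> (r - 1) * m" using assms(3,4) by simp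
  then have "1 \<le> real (r - 1) * real m" by (metis of_nat_1 of_nat_le_iff of_nat_mult)
  then have "real t * 40 * real m * 1 \<le> real t * 40 * real m * (real (r - 1) * real m)"
    by (rule mult_left_mono) simp
  also have "\<dots> = real t * real (r - 1) * 40 * real m ^ 2" by (simp add: power2_eq_square)
  also have "\<dots> \<le> d * real (n - 1)" by (rule assms(1))
  also have "\<dots> \<le> real (n - 1)" using assms(2) mult_right_mono[of d 1 "real (n - 1)"] by simp
  finally have "real (40 * (t * m)) \<le> real (n - 1)" by (simp add: algebra_simps)
  then show ?thesis by (simp only: of_nat_le_iff)
qed

text \<open>Here p stands for the Turan density of F, and N1 is a threshold beyond which the Turan
  bound holds with slack \<delta>/(20m), where \<delta> = 1 - m p.\<close>
locale suspension_stability =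
  fixes m r :: nat and F :: "nat set set" and p :: real and N1 :: nat
  assumes r_ge_2: "2 \<le> r" and r_le_m: "r \<le> m"
    and F_graph: "kgraph_on (r - 1) {0..<m - 1} F" and F_nonempty: "F \<noteq> {}"
    and p_nonneg: "0 \<le> p" and mp_less_1: "real m * p < 1"
    and exs_F_le: "\<And>a. N1 \<le> a \<Longrightarrow>
      real (exs a (r - 1) {0..<m - 1} F 1) \<le> (p + (1 - real m * p) / (20 * real m)) * real (a choose (r - 1))"
begin

abbreviation "Fh \<equiv> suspension m F"

abbreviation "exh a \<equiv> exs a r {0..<m} Fh 1"

definition "\<delta> = 1 - real m * p"

definition "\<theta> = p + \<delta> / (10 * real m)"

definition "n1 = 2 * N1 + 2 * m + 2"

text \<open>The second bound on t in the corollary, with denominators cleared.\<close>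
definition admissible :: "nat \<Rightarrow> nat \<Rightarrow> bool" where
  "admissible n t \<longleftrightarrow> real t * real (r - 1) * 40 * real m ^ 2 \<le> \<delta> * real (n - 1)"

lemma m_ge_1: "1 \<le> m" using r_ge_2 r_le_m by simp

lemma \<delta>_pos: "0 < \<delta>" using mp_less_1 unfolding \<delta>_def by simp

lemma \<delta>_le_1: "\<delta> \<le> 1" using p_nonneg unfolding \<delta>_def by simp

lemma \<theta>_nonneg: "0 \<le> \<theta>" unfolding \<theta>_def using p_nonneg \<delta>_pos m_ge_1 by simp

lemma m_mult_\<theta>: "real m * \<theta> = 1 - 9 * \<delta> / 10"
  unfolding \<theta>_def using m_ge_1 by (simp add: \<delta>_def field_simps)

lemma p_plus_le_\<theta>: "p + \<delta> / (20 * real m) \<le> \<theta>"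
  unfolding \<theta>_def using \<delta>_pos m_ge_1 by (simp add: field_simps)

lemma Fh_nonempty: "Fh \<noteq> {}" using F_nonempty unfolding suspension_def by simp

lemma Fh_edges_subset: "\<forall>e\<in>Fh. e \<subseteq> {0..<m}"
proof
  fix e assume "e \<in> Fh"
  then obtain e' where "e = insert (m - 1) e'" "e' \<subseteq> {0..<m - 1}"
    using F_graph unfolding suspension_def kgraph_on_def by blast
  then show "e \<subseteq> {0..<m}" using m_ge_1 by auto
qed

lemma exs_F_le_\<delta>: "N1 \<le> a \<Longrightarrow> real (exs a (r - 1) {0..<m - 1} F 1) \<le> (p + \<delta> / (20 * real m)) * real (a choose (r - 1))"
  using exs_F_le unfolding \<delta>_def .

lemma admissible_imp_tm_le: "admissible n t \<Longrightarrow> 40 * (t * m) \<le> n - 1"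
  unfolding admissible_def using bound_imp_tm_le \<delta>_le_1 m_ge_1 r_ge_2 by blast

lemma admissible_imp_n1_le: "2 * n1 \<le> n \<Longrightarrow> admissible n t \<Longrightarrow> n1 + t \<le> n"
  using admissible_imp_tm_le[of n t] m_ge_1 mult_le_mono2[of 1 m t] by linarith

lemma admissible_Suc:
  assumes "admissible n (Suc t)" "2 \<le> n"
  shows "admissible (n - 1) t"
proof -
  have "1 \<le> real m ^ 2" using m_ge_1 by (simp add: one_le_power)
  then have "1 * 1 \<le> real (r - 1) * (40 * real m ^ 2)"
    by (intro mult_mono) (use r_ge_2 in simp_all)
  then have step: "1 \<le> real (r - 1) * 40 * real m ^ 2" by (simp only: mult.assoc mult_1)
  have "real (Suc t) * real (r - 1) * 40 * real m ^ 2
      = real t * real (r - 1) * 40 * real m ^ 2 + real (r - 1) * 40 * real m ^ 2"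
    by (simp add: algebra_simps)
  moreover have "\<delta> * (real (n - 1) - 1) = \<delta> * real (n - 1) - \<delta>" by (simp add: algebra_simps)
  ultimately have "real t * real (r - 1) * 40 * real m ^ 2 \<le> \<delta> * (real (n - 1) - 1)"
    using assms(1) step \<delta>_le_1 unfolding admissible_def by linarith
  moreover have "real (n - 1 - 1) = real (n - 1) - 1" using assms(2) by (simp add: of_nat_diff)
  ultimately show ?thesis unfolding admissible_def by simp
qed

lemma admissible_choose_le:
  assumes "admissible n t" "2 \<le> n"
  shows "real (t * ((n - 2) choose (r - 2))) * 40 * real m ^ 2 \<le> \<delta> * real ((n - 1) choose (r - 1))"
proof -
  have "(r - 1) * ((n - 1) choose (r - 1)) = (n - 1) * ((n - 2) choose (r - 2))"
    using times_binomial_minus1_eq[of "r - 1" "n - 1"] r_ge_2 by (simp add: diff_diff_add numeral_2_eq_2)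
  then have binom: "real (r - 1) * real ((n - 1) choose (r - 1)) = real (n - 1) * real ((n - 2) choose (r - 2))"
    by (metis of_nat_mult)
  let ?C = "real ((n - 2) choose (r - 2))"
  have "real t * real (r - 1) * 40 * real m ^ 2 * ?C \<le> \<delta> * real (n - 1) * ?C"
    using assms(1) unfolding admissible_def by (rule mult_right_mono) simp
  also have "\<dots> = \<delta> * real (r - 1) * real ((n - 1) choose (r - 1))" using binom by (simp add: algebra_simps)
  finally have "real (r - 1) * (real t * ?C * 40 * real m ^ 2) \<le> real (r - 1) * (\<delta> * real ((n - 1) choose (r - 1)))"
    by (simp add: algebra_simps)
  then show ?thesis using r_ge_2 by (simp add: mult_le_cancel_left)
qed

lemma exh_add_le:
  assumes "N1 \<le> b" "b + j \<le> n"
  shows "real (exh (b + j)) \<le> real (exh b) + real j * ((p + \<delta> / (20 * real m)) * real ((n - 1) choose (r - 1)))"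
  using assms(2)
proof (induction j)
  case (Suc j)
  let ?X = "(p + \<delta> / (20 * real m)) * real ((n - 1) choose (r - 1))"
  have "real (exs (b + j) (r - 1) {0..<m - 1} F 1) \<le> (p + \<delta> / (20 * real m)) * real ((b + j) choose (r - 1))"
    using exs_F_le_\<delta> assms(1) by simp
  also have "\<dots> \<le> ?X"
    using Suc.prems p_nonneg \<delta>_pos by (intro mult_left_mono) (simp_all add: binomial_right_mono)
  finally have "real (exh (Suc (b + j))) \<le> real (exh (b + j)) + ?X"
    using exs_suspension_Suc_le[OF m_ge_1 F_graph F_nonempty, of "b + j" r] by linarith
  moreover have "real (exh (b + j)) \<le> real (exh b) + real j * ?X" using Suc by simp
  moreover have "real (Suc j) * ?X = real j * ?X + ?X"
    by (simp only: of_nat_Suc distrib_right mult_1_left)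
  ultimately show ?case unfolding add_Suc_right by linarith
qed simp

text \<open>Between n - t and n - s m vertices the extremal number grows by at most
  (p + \<delta>/(20m)) binom(n-1, r-1) \<le> \<theta> binom(n-1, r-1) per vertex, and it is monotone if s m > t.\<close>
lemma exh_shift_le:
  assumes "s \<le> t" "n1 + t \<le> n" "admissible n t"
  defines "D \<equiv> \<theta> * real ((n - 1) choose (r - 1))"
  shows "real (exh (n - s * m)) + real (s * m) * D \<le> real (exh (n - t)) + real t * (real m * D)"
proof -
  have tm: "40 * (t * m) \<le> n - 1" using admissible_imp_tm_le[OF assms(3)] .
  have D: "0 \<le> D" unfolding D_def using \<theta>_nonneg by simp
  show ?thesis
  proof (cases "s * m \<le> t")
    case True
    have "real (exh (n - t + (t - s * m)))
        \<le> real (exh (n - t)) + real (t - s * m) * ((p + \<delta> / (20 * real m)) * real ((n - 1) choose (r - 1)))"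
      by (rule exh_add_le) (use True assms(2) in \<open>simp_all add: n1_def\<close>)
    also have "\<dots> \<le> real (exh (n - t)) + real (t - s * m) * D"
      unfolding D_def using p_plus_le_\<theta> by (intro add_left_mono mult_left_mono mult_right_mono) simp_all
    finally have "real (exh (n - s * m)) \<le> real (exh (n - t)) + real (t - s * m) * D"
      using True assms(2) by simp
    moreover have "real t * D \<le> real t * (real m * D)"
      using m_ge_1 D by (intro mult_left_mono) (simp_all add: mult_le_cancel_right1)
    ultimately show ?thesis using True by (simp add: of_nat_diff algebra_simps)
  next
    case False
    have "s * m \<le> t * m" using assms(1) by simp
    then have "m \<le> n - s * m" using tm assms(2) unfolding n1_def by linarith
    then have "exh (n - s * m) \<le> exh (n - s * m + (s * m - t))"
      by (intro exs_mono Fh_nonempty) simp_all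
    also have "n - s * m + (s * m - t) = n - t" using False \<open>s * m \<le> t * m\<close> tm assms(2) by linarith
    finally have "real (exh (n - s * m)) \<le> real (exh (n - t))" by simp
    moreover have "real (s * m) \<le> real (t * m)" using \<open>s * m \<le> t * m\<close> by (simp only: of_nat_le_iff)
    then have "real (s * m) * D \<le> real (t * m) * D" using D by (rule mult_right_mono)
    then have "real (s * m) * D \<le> real t * (real m * D)" by (simp add: algebra_simps)
    ultimately show ?thesis by simp
  qed
qed

lemma num_meeting_lower:
  assumes "1 \<le> t" "admissible n t" "n1 + t \<le> n"
  defines "N \<equiv> real ((n - 1) choose (r - 1))"
  shows "real t * N * (1 - \<delta> / 40) \<le> real (num_meeting r n t)"
proof -
  have n: "2 \<le> n" "r \<le> n - t" using assms(3) r_le_m unfolding n1_def by simp_all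
  have "(n - 1) choose (r - 1) \<le> ((n - 1 - (t - 1)) choose (r - 1)) + (t - 1) * ((n - 1 - 1) choose (r - 1 - 1))"
    by (rule choose_le_choose_diff_plus) (use r_ge_2 assms(1) n in auto)
  then have "(n - 1) choose (r - 1) \<le> ((n - t) choose (r - 1)) + (t - 1) * ((n - 2) choose (r - 2))"
    using assms(1) by (simp add: numeral_2_eq_2 diff_diff_add)
  then have "N \<le> real ((n - t) choose (r - 1)) + real ((t - 1) * ((n - 2) choose (r - 2)))"
    unfolding N_def by (metis of_nat_add of_nat_le_iff)
  moreover have "real ((t - 1) * ((n - 2) choose (r - 2))) * 40 \<le> \<delta> * N"
  proof -
    have "(t - 1) * ((n - 2) choose (r - 2)) \<le> t * ((n - 2) choose (r - 2))" by simp
    then have "real ((t - 1) * ((n - 2) choose (r - 2))) \<le> real (t * ((n - 2) choose (r - 2)))"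
      by (simp only: of_nat_le_iff)
    moreover have "1 \<le> real m ^ 2" using m_ge_1 by (simp add: one_le_power)
    then have "real (t * ((n - 2) choose (r - 2))) * 40 \<le> real (t * ((n - 2) choose (r - 2))) * 40 * real m ^ 2"
      using mult_left_mono[of 1 "real m ^ 2" "real (t * ((n - 2) choose (r - 2))) * 40"] by simp
    ultimately have "real ((t - 1) * ((n - 2) choose (r - 2))) * 40 \<le> real (t * ((n - 2) choose (r - 2))) * 40 * real m ^ 2"
      by linarith
    then show ?thesis using admissible_choose_le[OF assms(2) n(1)] unfolding N_def by linarith
  qed
  ultimately have "N * (1 - \<delta> / 40) \<le> real ((n - t) choose (r - 1))" by (simp add: algebra_simps)
  then have "real t * N * (1 - \<delta> / 40) \<le> real (t * ((n - t) choose (r - 1)))"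
    by (simp add: mult.assoc mult_left_mono)
  also have "\<dots> \<le> real (num_meeting r n t)"
    unfolding of_nat_le_iff using mult_choose_le_num_meeting[of r t n] r_ge_2 assms(3) by simp
  finally show ?thesis .
qed

lemma has_copy_of_dense_link:
  assumes "finite V'" "kgraph_on (r - 1) V' L" "N1 \<le> card V'" "card V' \<le> a"
    and dense: "(p + \<delta> / (20 * real m)) * real (a choose (r - 1)) < real (card L)"
  shows "has_copies_on 1 {0..<m - 1} F V' L"
proof (rule ccontr)
  assume "\<not> has_copies_on 1 {0..<m - 1} F V' L"
  then have "card L \<le> exs (card V') (r - 1) {0..<m - 1} F 1"
    using card_le_ex_on[OF assms(1,2)] ex_on_eq_exs_card[OF assms(1)] by simp
  also have "real \<dots> \<le> (p + \<delta> / (20 * real m)) * real (card V' choose (r - 1))"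
    using exs_F_le_\<delta> assms(3) by simp
  also have "\<dots> \<le> (p + \<delta> / (20 * real m)) * real (a choose (r - 1))"
    using assms(4) p_nonneg \<delta>_pos by (intro mult_left_mono) (simp_all add: binomial_right_mono)
  finally show False using dense by simp
qed

text \<open>Deleting the t m vertices W costs the link of u at most t m binom(n-2, r-2) edges, which
  admissibility bounds by \<delta>/(40m) binom(n-1, r-1); the margin \<theta> - \<delta>/(40m) > p + \<delta>/(20m) remains.\<close>
lemma card_link_outside_gt:
  assumes V: "finite V" "u \<in> V" and H: "kgraph_on r V H"
    and n: "n1 + t \<le> card V" and adm: "admissible (card V) t"
    and deg: "\<theta> * real ((card V - 1) choose (r - 1)) \<le> real (deg H u)"
    and W: "W \<subseteq> V - {u}" "card W = t * m"
  shows "(p + \<delta> / (20 * real m)) * real ((card V - 1) choose (r - 1)) < real (card (link H u (V - {u} - W)))"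
proof -
  let ?n = "card V" and ?N = "real ((card V - 1) choose (r - 1))"
  have "real (t * m * ((?n - 2) choose (r - 2))) * (40 * real m) \<le> \<delta> * ?N"
    using admissible_choose_le[OF adm] n unfolding n1_def by (simp add: power2_eq_square algebra_simps)
  then have "real (t * m * ((?n - 2) choose (r - 2))) \<le> \<delta> * ?N / (40 * real m)"
    using m_ge_1 by (simp add: pos_le_divide_eq)
  moreover have "deg H u \<le> card (link H u (V - {u} - W)) + t * m * ((?n - 2) choose (r - 2))"
    using deg_le_card_link_plus[OF H V W(1)] W(2) by simp
  ultimately have "\<theta> * ?N - \<delta> * ?N / (40 * real m) \<le> real (card (link H u (V - {u} - W)))"
    using deg by linarith
  moreover have "0 < ?N" using n r_le_m unfolding n1_def by simp
  then have "(p + \<delta> / (20 * real m)) * ?N < (\<theta> - \<delta> / (40 * real m)) * ?N"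
    unfolding \<theta>_def using \<delta>_pos m_ge_1 by (intro mult_strict_right_mono) (simp_all add: field_simps)
  ultimately show ?thesis by (simp add: left_diff_distrib)
qed

lemma has_copies_on_Suc_of_high_deg:
  assumes V: "finite V" "u \<in> V" and H: "kgraph_on r V H"
    and n: "n1 + t \<le> card V" and adm: "admissible (card V) t"
    and deg: "\<theta> * real ((card V - 1) choose (r - 1)) \<le> real (deg H u)"
    and copies: "has_copies_on t {0..<m} Fh (V - {u}) {e\<in>H. u \<notin> e}"
  shows "has_copies_on (Suc t) {0..<m} Fh V H"
proof -
  obtain W where W: "W \<subseteq> V - {u}" "card W = t * card {0..<m}"
    and ext: "\<And>\<psi> V' H'. V - {u} \<subseteq> V' \<Longrightarrow> {e\<in>H. u \<notin> e} \<subseteq> H' \<Longrightarrow> embeds {0..<m} Fh V' H' \<psi>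
      \<Longrightarrow> \<psi> ` {0..<m} \<inter> W = {} \<Longrightarrow> has_copies_on (Suc t) {0..<m} Fh V' H'"
    by (rule obtain_copies_support[OF copies finite_atLeastLessThan], rule that)
  define V' where "V' = V - {u} - W"
  have "card V' = card V - 1 - t * m"
    unfolding V'_def using W V by (simp add: card_Diff_subset finite_subset)
  moreover have "40 * (t * m) \<le> card V - 1" by (rule admissible_imp_tm_le[OF adm])
  moreover have "kgraph_on (r - 1) V' (link H u V')"
    by (rule kgraph_on_link[OF H V(1)]) (auto simp: V'_def)
  ultimately have "has_copies_on 1 {0..<m - 1} F V' (link H u V')"
    using has_copy_of_dense_link[of V' "link H u V'" "card V - 1"] card_link_outside_gt[OF V H n adm deg W(1)]
      W(2) n V(1) unfolding V'_def n1_def by simp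
  then obtain \<psi> where "embeds {0..<m - 1} F V' (link H u V') \<psi>" unfolding has_copies_on_1 ..
  from embeds_suspension_of_link[OF m_ge_1 _ F_graph this]
  have emb: "embeds {0..<m} Fh (insert u V') H (\<psi>(m - 1 := u))" by (simp add: V'_def)
  then have embV: "embeds {0..<m} Fh V H (\<psi>(m - 1 := u))"
    by (rule embeds_mono) (use V(2) in \<open>auto simp: V'_def\<close>)
  have "(\<psi>(m - 1 := u)) ` {0..<m} \<subseteq> insert u V'" using emb unfolding embeds_def by (elim conjE)
  then have "(\<psi>(m - 1 := u)) ` {0..<m} \<inter> W = {}" using W(1) unfolding V'_def by blast
  then show ?thesis by (intro ext[OF _ _ embV]) auto
qed

text \<open>If all degrees were below \<theta> binom(n-1, r-1), a maximal packing of s \<le> t copies would bound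
  the number of edges by ex(n - t) + (1 - 9\<delta>/10) t binom(n-1, r-1), below the assumed size.\<close>
lemma exists_high_deg_vertex:
  assumes V: "finite V" and H: "kgraph_on r V H"
    and t: "1 \<le> t" "n1 + t \<le> card V" "admissible (card V) t"
    and no_copies: "\<not> has_copies_on (Suc t) {0..<m} Fh V H"
    and big: "num_meeting r (card V) t + exh (card V - t) \<le> card H"
  shows "\<exists>u\<in>V. \<theta> * real ((card V - 1) choose (r - 1)) \<le> real (deg H u)"
proof (rule ccontr)
  let ?n = "card V" and ?N = "real ((card V - 1) choose (r - 1))"
  assume "\<not> ?thesis"
  then have small: "real (deg H u) \<le> \<theta> * ?N" if "u \<in> V" for u using that by force
  obtain s where s: "s \<le> t" "has_copies_on s {0..<m} Fh V H" "\<not> has_copies_on (Suc s) {0..<m} Fh V H"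
    using obtain_maximal_packing[OF no_copies] .
  have "real (card H) \<le> real (exh (?n - s * m)) + real (s * m) * (\<theta> * ?N)"
    using card_le_exs_plus_degrees[OF V finite_atLeastLessThan H s(2,3) small] by simp
  also have "\<dots> \<le> real (exh (?n - t)) + real t * (real m * (\<theta> * ?N))"
    by (rule exh_shift_le[OF s(1) t(2,3)])
  also have "real t * (real m * (\<theta> * ?N)) = real t * ?N * (real m * \<theta>)" by (simp add: algebra_simps)
  also have "\<dots> = real t * ?N * (1 - 9 * \<delta> / 10)" by (simp only: m_mult_\<theta>)
  finally have upper: "real (card H) \<le> real (exh (?n - t)) + real t * ?N * (1 - 9 * \<delta> / 10)" .
  have "real t * ?N * (1 - \<delta> / 40) + real (exh (?n - t)) \<le> real (card H)"
    using num_meeting_lower[OF t(1,3,2)] big by linarith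
  moreover have "0 < real t * ?N * \<delta>"
    using t \<delta>_pos r_le_m unfolding n1_def by simp
  ultimately show False using upper by (simp add: algebra_simps)
qed

definition splits_off :: "nat set \<Rightarrow> nat set set \<Rightarrow> nat set \<Rightarrow> bool" where
  "splits_off V H T \<longleftrightarrow> T \<subseteq> V \<and> meeting r V T \<subseteq> H \<and> \<not> has_copies_on 1 {0..<m} Fh (V - T) {e\<in>H. e \<subseteq> V - T}"

lemma splits_off_insert:
  assumes V: "finite V" "u \<in> V" and H: "kgraph_on r V H"
    and deg: "deg H u = (card V - 1) choose (r - 1)"
    and T: "splits_off (V - {u}) {e\<in>H. u \<notin> e} T"
  shows "splits_off V H (insert u T)"
proof -
  have "e \<in> H" if e: "e \<in> meeting r V (insert u T)" for e
  proof (cases "u \<in> e")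
    case True
    then show ?thesis using full_deg_imp_edges[OF H V(1,2) deg] e unfolding meeting_def by blast
  next
    case False
    then have "e \<in> meeting r (V - {u}) T" using e unfolding meeting_def by blast
    then show ?thesis using T unfolding splits_off_def by blast
  qed
  moreover have "V - insert u T = V - {u} - T" by blast
  moreover have "{e\<in>H. e \<subseteq> V - {u} - T} = {e\<in>{e\<in>H. u \<notin> e}. e \<subseteq> V - {u} - T}" by blast
  ultimately show ?thesis using T V(2) unfolding splits_off_def by auto
qed

definition stable :: "nat set \<Rightarrow> nat set set \<Rightarrow> nat \<Rightarrow> bool" where
  "stable V H t \<longleftrightarrow> card H \<le> num_meeting r (card V) t + exh (card V - t) \<and>
     (card H = num_meeting r (card V) t + exh (card V - t) \<longrightarrow> (\<exists>T. card T = t \<and> splits_off V H T))"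

lemma stable_delete_vertex:
  assumes V: "finite V" "u \<in> V" and H: "kgraph_on r V H" and stable: "stable (V - {u}) {e\<in>H. u \<notin> e} t"
  shows "stable V H (Suc t)"
  unfolding stable_def
proof (intro conjI impI)
  let ?n = "card V" and ?N = "(card V - 1) choose (r - 1)"
  have split: "card H = card {e\<in>H. u \<notin> e} + deg H u"
    by (rule card_eq_card_avoiding_plus_deg[OF finite_kgraph_on[OF V(1) H]])
  have deg_le: "deg H u \<le> ?N" using deg_le_choose[OF H V] .
  have meet: "num_meeting r (?n - 1) t + ?N = num_meeting r ?n (Suc t)"
  proof -
    have "1 \<le> ?n" using V card_gt_0_iff[of V] by (auto simp: Suc_le_eq)
    then show ?thesis using num_meeting_Suc[of r ?n t] r_ge_2 by simp
  qed
  have card_Vu: "card (V - {u}) = ?n - 1" using V by simp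
  then show "card H \<le> num_meeting r ?n (Suc t) + exh (?n - Suc t)"
    using stable split deg_le meet unfolding stable_def by simp
  assume "card H = num_meeting r ?n (Suc t) + exh (?n - Suc t)"
  then have "card {e\<in>H. u \<notin> e} = num_meeting r (?n - 1) t + exh (?n - Suc t)" and deg: "deg H u = ?N"
    using stable split deg_le meet card_Vu unfolding stable_def by simp_all
  then obtain T where T: "card T = t" "splits_off (V - {u}) {e\<in>H. u \<notin> e} T"
    using stable card_Vu unfolding stable_def by auto
  have "T \<subseteq> V - {u}" using T(2) unfolding splits_off_def by blast
  then have "finite T" "u \<notin> T" using rev_finite_subset[OF V(1), of T] by auto
  then have "card (insert u T) = Suc t" using T(1) by simp
  moreover have "splits_off V H (insert u T)" by (rule splits_off_insert[OF V H deg T(2)])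
  ultimately show "\<exists>T. card T = Suc t \<and> splits_off V H T" by blast
qed

text \<open>Induction on t: unless H is small, it has a vertex u of high degree; copies avoiding u
  extend by a copy through u, so H - u has one disjoint copy fewer.\<close>
theorem stable_if_no_copies:
  assumes "finite V" "n1 + t \<le> card V" "admissible (card V) t" "kgraph_on r V H"
    and "\<not> has_copies_on (Suc t) {0..<m} Fh V H"
  shows "stable V H t"
  using assms
proof (induction t arbitrary: V H)
  case 0
  have "card H \<le> exh (card V)"
    using card_le_ex_on[OF 0(1,4,5)] ex_on_eq_exs_card[OF 0(1)] by simp
  moreover have "{e\<in>H. e \<subseteq> V - {}} = H" using kgraph_on_subset_Pow[OF 0(4)] by auto
  then have "splits_off V H {}" using 0(5) unfolding splits_off_def meeting_def by simp
  ultimately show ?case unfolding stable_def num_meeting_def by (auto intro!: exI[of _ "{}"])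
next
  case (Suc t)
  note V = \<open>finite V\<close> and H = \<open>kgraph_on r V H\<close> and adm = \<open>admissible (card V) (Suc t)\<close>
    and n = \<open>n1 + Suc t \<le> card V\<close>
  show ?case
  proof (cases "card H < num_meeting r (card V) (Suc t) + exh (card V - Suc t)")
    case False
    then obtain u where u: "u \<in> V" "\<theta> * real ((card V - 1) choose (r - 1)) \<le> real (deg H u)"
      using exists_high_deg_vertex[OF V H _ n adm Suc.prems(5)] by auto
    have "\<not> has_copies_on (Suc t) {0..<m} Fh (V - {u}) {e\<in>H. u \<notin> e}"
      using has_copies_on_Suc_of_high_deg[OF V u(1) H n adm u(2)] Suc.prems(5) by blast
    moreover have "kgraph_on r (V - {u}) {e\<in>H. u \<notin> e}" using H unfolding kgraph_on_def by auto
    moreover have "2 \<le> card V" using n unfolding n1_def by simp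
    ultimately have "stable (V - {u}) {e\<in>H. u \<notin> e} t"
      using Suc.IH[of "V - {u}"] V n u(1) admissible_Suc[OF adm] by simp
    then show ?thesis by (rule stable_delete_vertex[OF V u(1) H])
  qed (simp add: stable_def)
qed

end

section \<open>Extremal graphs\<close>

lemma join_clique_eq: "join_clique r n t G = G \<union> meeting r {0..<n} {n - t..<n}"
  unfolding join_clique_def meeting_def by simp

lemma kgraph_on_join_clique:
  assumes "kgraph_on r {0..<n - t} G"
  shows "kgraph_on r {0..<n} (join_clique r n t G)"
proof -
  have "kgraph_on r {0..<n} G" using assms by (rule kgraph_on_mono) auto
  then show ?thesis unfolding join_clique_def kgraph_on_def by blast
qed

lemma card_join_clique:
  assumes "kgraph_on r {0..<n - t} G" "t \<le> n"
  shows "card (join_clique r n t G) = card G + num_meeting r n t"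
proof -
  have "G \<inter> meeting r {0..<n} {n - t..<n} = {}"
    using assms(1) unfolding kgraph_on_def meeting_def by fastforce
  moreover have "finite (meeting r {0..<n} {n - t..<n})"
    unfolding meeting_def by (rule finite_subset[of _ "Pow {0..<n}"]) auto
  moreover have "card (meeting r {0..<n} {n - t..<n}) = num_meeting r n t"
    using card_meeting[of "{0..<n}" "{n - t..<n}" r] assms(2) by simp
  ultimately show ?thesis
    unfolding join_clique_eq using finite_kgraph_on[OF _ assms(1)] by (simp add: card_Un_disjoint)
qed

text \<open>Each of t + 1 disjoint copies must use one of the t clique vertices.\<close>
lemma join_clique_no_copies:
  assumes F: "\<forall>e\<in>F. e \<subseteq> VF" and G: "\<not> has_copies_on 1 VF F {0..<n - t} G"
  shows "\<not> has_copies_on (Suc t) VF F {0..<n} (join_clique r n t G)"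
proof
  let ?T = "{n - t..<n}"
  assume "has_copies_on (Suc t) VF F {0..<n} (join_clique r n t G)"
  then obtain \<phi> where emb: "\<forall>i<Suc t. embeds VF F {0..<n} (join_clique r n t G) (\<phi> i)"
    and disj: "\<forall>i<Suc t. \<forall>j<Suc t. i \<noteq> j \<longrightarrow> \<phi> i ` VF \<inter> \<phi> j ` VF = {}"
    unfolding has_copies_on_def by blast
  have meets: "\<phi> i ` VF \<inter> ?T \<noteq> {}" if i: "i < Suc t" for i
  proof
    assume avoid: "\<phi> i ` VF \<inter> ?T = {}"
    have \<phi>: "inj_on (\<phi> i) VF" "\<phi> i ` VF \<subseteq> {0..<n}" "\<forall>e\<in>F. \<phi> i ` e \<in> join_clique r n t G"
      using emb i unfolding embeds_def by auto
    have "\<phi> i ` VF \<subseteq> {0..<n - t}"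
    proof
      fix x assume "x \<in> \<phi> i ` VF"
      then have "x < n" "x \<notin> ?T" using \<phi>(2) avoid by auto
      then show "x \<in> {0..<n - t}" by simp
    qed
    moreover have "\<phi> i ` e \<in> G" if "e \<in> F" for e
    proof -
      have "\<phi> i ` e \<inter> ?T = {}" using avoid F that by blast
      then show ?thesis using \<phi>(3) that unfolding join_clique_def by blast
    qed
    ultimately have "embeds VF F {0..<n - t} G (\<phi> i)" using \<phi>(1) unfolding embeds_def by blast
    then show False using G unfolding has_copies_on_1 by blast
  qed
  define c where "c i = (SOME x. x \<in> \<phi> i ` VF \<inter> ?T)" for i
  have c: "c i \<in> \<phi> i ` VF \<inter> ?T" if "i < Suc t" for i
    unfolding c_def using meets[OF that] by (metis ex_in_conv someI_ex)
  have "inj_on c {..<Suc t}"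
    using c disj by (intro inj_onI) (metis IntD1 disjoint_iff lessThan_iff)
  moreover have "c ` {..<Suc t} \<subseteq> ?T" using c by blast
  ultimately have "card {..<Suc t} \<le> card ?T" by (intro card_inj_on_le) auto
  then show False by simp
qed

lemma exists_bij_onto_tail:
  assumes T: "T \<subseteq> {0..<n}" "card T = t"
  obtains \<sigma> where "bij_betw \<sigma> {0..<n} {0..<n}" "\<sigma> ` {n - t..<n} = T" "\<sigma> ` {0..<n - t} = {0..<n} - T"
proof -
  have tn: "t \<le> n" using T card_mono[OF _ T(1)] by fastforce
  obtain f1 where f1: "bij_betw f1 {0..<n - t} ({0..<n} - T)"
    using finite_same_card_bij[of "{0..<n - t}" "{0..<n} - T"] T by (auto simp: card_Diff_subset finite_subset)
  obtain f2 where f2: "bij_betw f2 {n - t..<n} T"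
    using finite_same_card_bij[of "{n - t..<n}" T] T tn finite_subset by fastforce
  define \<sigma> where "\<sigma> x = (if x < n - t then f1 x else f2 x)" for x
  have b1: "bij_betw \<sigma> {0..<n - t} ({0..<n} - T)"
    using f1 by (rule bij_betw_cong[THEN iffD1, rotated]) (simp add: \<sigma>_def)
  have b2: "bij_betw \<sigma> {n - t..<n} T"
    using f2 by (rule bij_betw_cong[THEN iffD1, rotated]) (simp add: \<sigma>_def)
  have "bij_betw \<sigma> ({0..<n - t} \<union> {n - t..<n}) (({0..<n} - T) \<union> T)"
    by (rule bij_betw_combine[OF b1 b2]) blast
  moreover have "{0..<n - t} \<union> {n - t..<n} = {0..<n}" "({0..<n} - T) \<union> T = {0..<n}" using tn T by auto
  ultimately show ?thesis using that b1 b2 unfolding bij_betw_def by auto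
qed

lemma image_meeting:
  assumes \<sigma>: "bij_betw \<sigma> V V" and V: "finite V" "T' \<subseteq> V"
  shows "(`) \<sigma> ` meeting r V T' = meeting r V (\<sigma> ` T')"
proof (rule card_subset_eq)
  have inj: "inj_on \<sigma> V" and img: "\<sigma> ` V = V" using \<sigma> unfolding bij_betw_def by auto
  show "finite (meeting r V (\<sigma> ` T'))"
    unfolding meeting_def by (rule finite_subset[of _ "Pow V"]) (use V(1) in auto)
  show "(`) \<sigma> ` meeting r V T' \<subseteq> meeting r V (\<sigma> ` T')"
  proof
    fix x assume "x \<in> (`) \<sigma> ` meeting r V T'"
    then obtain e where e: "e \<subseteq> V" "card e = r" "e \<inter> T' \<noteq> {}" "x = \<sigma> ` e" unfolding meeting_def by blast
    have "\<sigma> ` e \<subseteq> V" using e(1) img by blast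
    moreover have "card (\<sigma> ` e) = r" using e(1,2) inj_on_subset[OF inj] by (simp add: card_image)
    moreover have "\<sigma> ` e \<inter> \<sigma> ` T' \<noteq> {}" using e(3) by blast
    ultimately show "x \<in> meeting r V (\<sigma> ` T')" unfolding meeting_def e(4) by blast
  qed
  have "card ((`) \<sigma> ` meeting r V T') = card (meeting r V T')"
    by (rule card_image_graph[OF inj]) (auto simp: meeting_def)
  also have "\<dots> = card (meeting r V (\<sigma> ` T'))"
    using card_meeting[OF V] card_meeting[OF V(1) image_mono[OF V(2), of \<sigma>, unfolded img]]
      card_image[OF inj_on_subset[OF inj V(2)]] by simp
  finally show "card ((`) \<sigma> ` meeting r V T') = card (meeting r V (\<sigma> ` T'))" .
qed

context suspension_stability
begin

lemma exs_Suc_eq: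
  assumes "2 * n1 \<le> n" "admissible n t"
  shows "exs n r {0..<m} Fh (Suc t) = num_meeting r n t + exh (n - t)"
proof (rule antisym)
  have n: "n1 + t \<le> n" using admissible_imp_n1_le[OF assms] .
  obtain H where H: "kgraph_on r {0..<n} H" "\<not> has_copies_on (Suc t) {0..<m} Fh {0..<n} H"
    "card H = exs n r {0..<m} Fh (Suc t)"
    using obtain_extremal_graph[of "{0..<n}" Fh "Suc t" r "{0..<m}"] Fh_nonempty
    by (auto simp: exs_eq_ex_on)
  then show "exs n r {0..<m} Fh (Suc t) \<le> num_meeting r n t + exh (n - t)"
    using stable_if_no_copies[of "{0..<n}" t H] n assms(2) unfolding stable_def by simp
  obtain G where G: "kgraph_on r {0..<n - t} G" "\<not> has_copies_on 1 {0..<m} Fh {0..<n - t} G"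
    "card G = exh (n - t)"
    using obtain_extremal_graph[of "{0..<n - t}" Fh 1 r "{0..<m}"] Fh_nonempty
    by (auto simp: exs_eq_ex_on)
  have "card (join_clique r n t G) \<le> exs n r {0..<m} Fh (Suc t)"
    using card_le_ex_on[OF _ kgraph_on_join_clique[OF G(1)] join_clique_no_copies[OF Fh_edges_subset G(2)]]
    by (simp add: exs_eq_ex_on)
  then show "num_meeting r n t + exh (n - t) \<le> exs n r {0..<m} Fh (Suc t)"
    using card_join_clique[OF G(1)] G(3) n by simp
qed

lemma splits_off_eq_Un:
  assumes H: "kgraph_on r V H" and T: "splits_off V H T"
  shows "H = meeting r V T \<union> {e\<in>H. e \<subseteq> V - T}"
proof
  show "H \<subseteq> meeting r V T \<union> {e\<in>H. e \<subseteq> V - T}"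
  proof
    fix e assume "e \<in> H"
    moreover have "e \<subseteq> V" "card e = r" using H \<open>e \<in> H\<close> unfolding kgraph_on_def by auto
    ultimately show "e \<in> meeting r V T \<union> {e\<in>H. e \<subseteq> V - T}" unfolding meeting_def by blast
  qed
  show "meeting r V T \<union> {e\<in>H. e \<subseteq> V - T} \<subseteq> H" using T unfolding splits_off_def by blast
qed

lemma card_splits_off:
  assumes V: "finite V" and H: "kgraph_on r V H" and T: "splits_off V H T"
  shows "card H = num_meeting r (card V) (card T) + card {e\<in>H. e \<subseteq> V - T}"
proof -
  have "finite (meeting r V T)" unfolding meeting_def by (rule finite_subset[of _ "Pow V"]) (use V in auto)
  moreover have "finite {e\<in>H. e \<subseteq> V - T}" using finite_kgraph_on[OF V H] by simp
  moreover have "meeting r V T \<inter> {e\<in>H. e \<subseteq> V - T} = {}" unfolding meeting_def by blast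
  ultimately have "card H = card (meeting r V T) + card {e\<in>H. e \<subseteq> V - T}"
    using splits_off_eq_Un[OF H T] by (metis card_Un_disjoint)
  then show ?thesis using card_meeting[OF V] T unfolding splits_off_def by simp
qed

text \<open>Relabel so that T becomes the last t vertices; the rest of H, pulled back, is the graph G.\<close>
lemma splits_off_imp_join:
  assumes H: "kgraph_on r {0..<n} H" and T: "splits_off {0..<n} H T" "card T = t"
  obtains G \<sigma> where "kgraph_on r {0..<n - t} G" "\<not> has_copies_on 1 {0..<m} Fh {0..<n - t} G"
    "card H = num_meeting r n t + card G" "bij_betw \<sigma> {0..<n} {0..<n}" "H = (`) \<sigma> ` join_clique r n t G"
proof -
  let ?V = "{0..<n}"
  have TV: "T \<subseteq> ?V" using T(1) unfolding splits_off_def by blast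
  obtain \<sigma> where \<sigma>: "bij_betw \<sigma> ?V ?V" "\<sigma> ` {n - t..<n} = T" "\<sigma> ` {0..<n - t} = ?V - T"
    using exists_bij_onto_tail[OF TV T(2)] .
  have inj: "inj_on \<sigma> ?V" and surj: "\<sigma> ` ?V = ?V" using \<sigma>(1) unfolding bij_betw_def by auto
  let ?\<tau> = "inv_into ?V \<sigma>" and ?Hrest = "{e\<in>H. e \<subseteq> ?V - T}"
  define G where "G = (`) ?\<tau> ` ?Hrest"
  have inj\<tau>: "inj_on ?\<tau> (?V - T)" by (rule inj_on_inv_into) (use surj in auto)
  have \<tau>: "?\<tau> ` (?V - T) = {0..<n - t}"
    using \<sigma>(3) inv_into_image_cancel[OF inj, of "{0..<n - t}"] by auto
  have Hrest: "kgraph_on r (?V - T) ?Hrest" using H unfolding kgraph_on_def by auto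
  have "kgraph_on r {0..<n - t} G" unfolding G_def using kgraph_on_image[OF inj\<tau> Hrest] \<tau> by simp
  moreover have "\<not> has_copies_on 1 {0..<m} Fh {0..<n - t} G"
    using has_copies_on_image_iff[OF inj\<tau> Hrest] T(1) \<tau> unfolding G_def splits_off_def by simp
  moreover have "card H = num_meeting r n t + card G"
    using card_splits_off[OF _ H T(1)] card_image_graph[OF inj\<tau> kgraph_on_subset_Pow[OF Hrest]] T(2)
    unfolding G_def by simp
  moreover have "(`) \<sigma> ` G = ?Hrest"
  proof -
    have "(`) \<sigma> ` G = (\<lambda>e. \<sigma> ` ?\<tau> ` e) ` ?Hrest" unfolding G_def by (rule image_image)
    also have "\<dots> = (\<lambda>e. e) ` ?Hrest" using image_inv_into_cancel[OF surj] by (intro image_cong) auto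
    finally show ?thesis by (simp only: image_ident)
  qed
  then have "H = (`) \<sigma> ` join_clique r n t G"
    using splits_off_eq_Un[OF H T(1)] image_meeting[OF \<sigma>(1) finite_atLeastLessThan, of "{n - t..<n}"] \<sigma>(2)
    unfolding join_clique_eq image_Un by (simp add: Un_commute)
  ultimately show ?thesis using \<sigma>(1) that by blast
qed

lemma join_in_EXs:
  assumes "2 * n1 \<le> n" "admissible n t"
    and G: "G \<in> EXs (n - t) r {0..<m} Fh 1" and \<sigma>: "bij_betw \<sigma> {0..<n} {0..<n}"
  shows "(`) \<sigma> ` join_clique r n t G \<in> EXs n r {0..<m} Fh (t + 1)"
proof -
  have G: "kgraph_on r {0..<n - t} G" "\<not> has_copies_on 1 {0..<m} Fh {0..<n - t} G" "card G = exh (n - t)"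
    using G unfolding EXs_def has_disj_copies_iff by auto
  have inj: "inj_on \<sigma> {0..<n}" and surj: "\<sigma> ` {0..<n} = {0..<n}" using \<sigma> unfolding bij_betw_def by auto
  note J = kgraph_on_join_clique[OF G(1)]
  have "kgraph_on r {0..<n} ((`) \<sigma> ` join_clique r n t G)" using kgraph_on_image[OF inj J] surj by simp
  moreover have "\<not> has_copies_on (Suc t) {0..<m} Fh {0..<n} ((`) \<sigma> ` join_clique r n t G)"
    using has_copies_on_image_iff[OF inj J] join_clique_no_copies[OF Fh_edges_subset G(2)] surj by simp
  moreover have "card ((`) \<sigma> ` join_clique r n t G) = exs n r {0..<m} Fh (Suc t)"
    using card_image_graph[OF inj kgraph_on_subset_Pow[OF J]] card_join_clique[OF G(1)] G(3)
      exs_Suc_eq[OF assms(1,2)] admissible_imp_n1_le[OF assms(1,2)] by simp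
  ultimately show ?thesis unfolding EXs_def has_disj_copies_iff by simp
qed

lemma EXs_imp_join:
  assumes "2 * n1 \<le> n" "admissible n t" and H: "H \<in> EXs n r {0..<m} Fh (t + 1)"
  obtains G \<sigma> where "G \<in> EXs (n - t) r {0..<m} Fh 1" "bij_betw \<sigma> {0..<n} {0..<n}"
    "H = (`) \<sigma> ` join_clique r n t G"
proof -
  have H: "kgraph_on r {0..<n} H" "\<not> has_copies_on (Suc t) {0..<m} Fh {0..<n} H"
    "card H = num_meeting r n t + exh (n - t)"
    using H exs_Suc_eq[OF assms(1,2)] unfolding EXs_def has_disj_copies_iff by auto
  then obtain T where "card T = t" "splits_off {0..<n} H T"
    using stable_if_no_copies[of "{0..<n}" t H] admissible_imp_n1_le[OF assms(1,2)] assms(2)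
    unfolding stable_def by auto
  then obtain G \<sigma> where G: "kgraph_on r {0..<n - t} G" "\<not> has_copies_on 1 {0..<m} Fh {0..<n - t} G"
    "card H = num_meeting r n t + card G" and \<sigma>: "bij_betw \<sigma> {0..<n} {0..<n}" "H = (`) \<sigma> ` join_clique r n t G"
    using splits_off_imp_join[OF H(1)] by metis
  have "G \<in> EXs (n - t) r {0..<m} Fh 1" using G H(3) unfolding EXs_def has_disj_copies_iff by simp
  with \<sigma> show ?thesis using that by blast
qed

theorem EXs_Suc_iff_join:
  assumes "2 * n1 \<le> n" "admissible n t"
  shows "H \<in> EXs n r {0..<m} Fh (t + 1) \<longleftrightarrow>
    (\<exists>G \<in> EXs (n - t) r {0..<m} Fh 1. \<exists>\<sigma>. bij_betw \<sigma> {0..<n} {0..<n} \<and> H = (`) \<sigma> ` join_clique r n t G)"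
  using EXs_imp_join[OF assms] join_in_EXs[OF assms] by metis

end

lemma EXs_no_edges: "finite VF \<Longrightarrow> s * card VF \<le> n \<Longrightarrow> EXs n k VF {} s = {}"
  using has_copies_on_no_edges[of VF "{0..<n}" s] unfolding EXs_def has_disj_copies_iff by auto

lemma EXs_suspension_empty:
  assumes "1 \<le> m" "2 * m + 2 \<le> n" "40 * (t * m) \<le> n - 1"
  shows "EXs n r {0..<m} (suspension m {}) (t + 1) = {}" "EXs (n - t) r {0..<m} (suspension m {}) 1 = {}"
proof -
  have "t \<le> t * m" "(t + 1) * m = t * m + m" using assms(1) by simp_all
  then have "(t + 1) * m \<le> n" "m \<le> n - t" using assms(2,3) by linarith+
  then show "EXs n r {0..<m} (suspension m {}) (t + 1) = {}" "EXs (n - t) r {0..<m} (suspension m {}) 1 = {}"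
    using EXs_no_edges[of "{0..<m}"] by (simp_all add: suspension_def)
qed

lemma exists_suspension_stability:
  assumes "2 \<le> r" "r \<le> m" "kgraph_on (r - 1) {0..<m - 1} F" "F \<noteq> {}"
    and "turan_density (r - 1) {0..<m - 1} F < 1 / real m"
  shows "\<exists>N1. suspension_stability m r F (turan_density (r - 1) {0..<m - 1} F) N1"
proof -
  let ?p = "turan_density (r - 1) {0..<m - 1} F"
  have p: "0 \<le> ?p" "real m * ?p < 1"
    using turan_density_tendsto(2)[of "{0..<m - 1}" "r - 1" F] assms(1,2,5) by (simp_all add: field_simps)
  then have "0 < (1 - real m * ?p) / (20 * real m)" using assms(1,2) by simp
  from eventually_exs_less_turan_density[OF finite_atLeastLessThan this, where k = "r - 1" and F = F]
  obtain N1 where "\<forall>a\<ge>N1. real (exs a (r - 1) {0..<m - 1} F 1)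
      < (?p + (1 - real m * ?p) / (20 * real m)) * real (a choose (r - 1))"
    unfolding eventually_sequentially by blast
  then have "suspension_stability m r F ?p N1"
    using assms p by unfold_locales (auto intro: less_imp_le)
  then show ?thesis ..
qed

theorem corollary1p9:
  fixes m r :: nat and F :: "nat set set"
  assumes "2 \<le> r" and "r \<le> m"
    and "kgraph_on (r - 1) {0..<m - 1} F"
    and "turan_density (r - 1) {0..<m - 1} F < 1 / real m"
  shows "\<exists>n0. \<forall>n\<ge>n0. \<forall>t::nat.
           real t \<le> min ((1 - real m * turan_density (r - 1) {0..<m - 1} F) / (5 * real m ^ 2)
                            * (real (exs n r {0..<m} (suspension m F) 1) / real ((n - 1) choose (r - 1))))
                         ((1 - real m * turan_density (r - 1) {0..<m - 1} F) / (40 * real m ^ 2)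
                            * (real (n - 1) / real (r - 1)))
           \<longrightarrow> (\<forall>H. H \<in> EXs n r {0..<m} (suspension m F) (t + 1) \<longleftrightarrow>
                    (\<exists>G \<in> EXs (n - t) r {0..<m} (suspension m F) 1.
                       \<exists>\<sigma>. bij_betw \<sigma> {0..<n} {0..<n} \<and>
                           H = (\<lambda>e. \<sigma> ` e) ` join_clique r n t G))"
proof -
  let ?p = "turan_density (r - 1) {0..<m - 1} F"
  have m: "1 \<le> m" using assms(1,2) by simp
  have p: "0 \<le> ?p" using turan_density_tendsto(2) by simp
  \<comment> \<open>only the second bound in the minimum is needed\<close>
  have t_bound: "real t * real (r - 1) * 40 * real m ^ 2 \<le> (1 - real m * ?p) * real (n - 1)"
    if "real t \<le> min A ((1 - real m * ?p) / (40 * real m ^ 2) * (real (n - 1) / real (r - 1)))" for t n A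
    using bound_clear_denominators[of t "1 - real m * ?p"] that m assms(1) by simp
  show ?thesis
  proof (cases "F = {}")
    case True
    then show ?thesis
      using EXs_suspension_empty[OF m] bound_imp_tm_le[OF t_bound] p m assms(1)
      by (intro exI[of _ "2 * m + 2"]) auto
  next
    case False
    then obtain N1 where "suspension_stability m r F ?p N1"
      using exists_suspension_stability assms by blast
    then interpret suspension_stability m r F ?p N1 .
    show ?thesis
      using EXs_Suc_iff_join t_bound unfolding admissible_def \<delta>_def by (intro exI[of _ "2 * n1"]) blast
  qed
qed

end
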